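(* Let $M$ be a smooth $n$-dimensional manifold endowed with a (pseudo-Riemannian) metric $g$ of arbitrary signature. Then for every smooth vector field $V$ on $M$, \[ \Box V+\mathrm{div}\big(\mathcal L_Vg-\mathrm{div}(V)\,g\big)^\sharp=\mathrm{Ric}^\sharp(V), \] \[ \Box\mathcal L_Vg-2\,\mathrm{Riem}(\mathcal L_Vg)-\mathcal L_{\Box V}g =2\,\mathcal L_V\mathrm{Ric}-\mathcal L_{\mathrm{Ric}^\sharp(V)}g-2\,\mathrm{sym}\big[\mathrm{Ric}^\sharp(\mathcal L_Vg)\big]. \]
   Context: $\nabla$ is the Levi-Civita connection of $g$, with curvature conventions $R_{abc}{}^d\omega_d=(\nabla_a\nabla_b-\nabla_b\nabla_a)\omega_c$ and $R_{ab}=R_{acb}{}^c$ (the Ricci tensor $\mathrm{Ric}$); indices are raised and lowered with $g$, and $\sharp$ raises an index. For a vector field or covariant 2-tensor $u$, $\Box u:=-\nabla^c\nabla_cu$. $\mathrm{Riem}(u)_{ab}:=R_a{}^c{}_b{}^du_{cd}$; $\mathrm{div}(V):=\nabla_aV^a$; $\mathrm{div}(u)_b:=\nabla^au_{ab}$; $\mathrm{Ric}^\sharp(V)$ is the vector field $R_a{}^bV_b$; $\mathrm{Ric}^\sharp(u)_{ab}:=R_a{}^cu_{cb}$; $\mathrm{sym}[u]_{ab}:=\tfrac12(u_{ab}+u_{ba})$; $\mathcal L$ is the Lie derivative. *)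

theory Defs
  imports "HOL-Analysis.Analysis"
begin

text \<open>Local coordinate formalisation: a chart domain U (open subset of R^n, n = CARD('n)),
metric components g x $ i $ j, vector field components V x $ i.
Tensor fields are functions from index lists to scalar fields.\<close>

definition pd :: "'n::finite \<Rightarrow> (real^'n \<Rightarrow> real) \<Rightarrow> real^'n \<Rightarrow> real" where
  "pd i f x = deriv (\<lambda>t. f (x + t *\<^sub>R axis i 1)) 0"

fun pds :: "'n::finite list \<Rightarrow> (real^'n \<Rightarrow> real) \<Rightarrow> real^'n \<Rightarrow> real" where
  "pds [] f = f"
| "pds (i # is) f = pd i (pds is f)"

definition smooth_on :: "(real^'n::finite) set \<Rightarrow> (real^'n \<Rightarrow> real) \<Rightarrow> bool" where
  "smooth_on U f \<longleftrightarrow> (\<forall>is. continuous_on U (pds is f) \<and>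
     (\<forall>i. \<forall>x\<in>U. ((\<lambda>t. pds is f (x + t *\<^sub>R axis i 1)) has_real_derivative pds (i # is) f x) (at 0)))"

definition ginv :: "(real^'n::finite \<Rightarrow> real^'n^'n) \<Rightarrow> real^'n \<Rightarrow> real^'n^'n" where
  "ginv g x = matrix_inv (g x)"

text \<open>Christoffel symbols: chr g x k i j = Gamma^k_{ij}.\<close>
definition chr :: "(real^'n::finite \<Rightarrow> real^'n^'n) \<Rightarrow> real^'n \<Rightarrow> 'n \<Rightarrow> 'n \<Rightarrow> 'n \<Rightarrow> real" where
  "chr g x k i j = (1/2) * (\<Sum>l\<in>UNIV. ginv g x $ k $ l *
     (pd i (\<lambda>y. g y $ j $ l) x + pd j (\<lambda>y. g y $ i $ l) x - pd l (\<lambda>y. g y $ i $ j) x))"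

text \<open>Levi-Civita covariant derivative of a tensor field T with index variances vs
(True = contravariant/upper, False = covariant/lower); the new derivative index comes first:
covD g vs T (c # js) = nabla_c T_{js}.\<close>
definition covD :: "(real^'n::finite \<Rightarrow> real^'n^'n) \<Rightarrow> bool list \<Rightarrow> ('n list \<Rightarrow> real^'n \<Rightarrow> real)
    \<Rightarrow> 'n list \<Rightarrow> real^'n \<Rightarrow> real" where
  "covD g vs T idx x = (case idx of [] \<Rightarrow> 0 | c # js \<Rightarrow>
     pd c (T js) x + (\<Sum>p<length vs. \<Sum>d\<in>UNIV.
        (if vs ! p then chr g x (js ! p) c d * T (js[p := d]) x
         else - chr g x d c (js ! p) * T (js[p := d]) x)))"

text \<open>Riemann tensor riem g x a b c d = R_{abc}^d, with
(nabla_a nabla_b - nabla_b nabla_a) omega_c = R_{abc}^d omega_d.\<close>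
definition riem :: "(real^'n::finite \<Rightarrow> real^'n^'n) \<Rightarrow> real^'n \<Rightarrow> 'n \<Rightarrow> 'n \<Rightarrow> 'n \<Rightarrow> 'n \<Rightarrow> real" where
  "riem g x a b c d = pd b (\<lambda>y. chr g y d a c) x - pd a (\<lambda>y. chr g y d b c) x
     + (\<Sum>e\<in>UNIV. chr g x e a c * chr g x d b e - chr g x e b c * chr g x d a e)"

definition ric :: "(real^'n::finite \<Rightarrow> real^'n^'n) \<Rightarrow> 'n \<Rightarrow> 'n \<Rightarrow> real^'n \<Rightarrow> real" where
  "ric g a b x = (\<Sum>c\<in>UNIV. riem g x a c b c)"

text \<open>Covariant 2-tensors are functions u a b x = u_{ab}(x).\<close>
definition vt :: "(real^'n::finite \<Rightarrow> real^'n) \<Rightarrow> 'n list \<Rightarrow> real^'n \<Rightarrow> real" where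
  "vt V idx x = V x $ (idx ! 0)"

definition t2 :: "('n::finite \<Rightarrow> 'n \<Rightarrow> real^'n \<Rightarrow> real) \<Rightarrow> 'n list \<Rightarrow> real^'n \<Rightarrow> real" where
  "t2 u idx x = u (idx ! 0) (idx ! 1) x"

definition gt :: "(real^'n::finite \<Rightarrow> real^'n^'n) \<Rightarrow> 'n \<Rightarrow> 'n \<Rightarrow> real^'n \<Rightarrow> real" where
  "gt g a b x = g x $ a $ b"

definition lie2 :: "(real^'n::finite \<Rightarrow> real^'n) \<Rightarrow> ('n \<Rightarrow> 'n \<Rightarrow> real^'n \<Rightarrow> real)
    \<Rightarrow> 'n \<Rightarrow> 'n \<Rightarrow> real^'n \<Rightarrow> real" where
  "lie2 W u a b x = (\<Sum>c\<in>UNIV. W x $ c * pd c (u a b) x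
      + u c b x * pd a (\<lambda>y. W y $ c) x + u a c x * pd b (\<lambda>y. W y $ c) x)"

definition boxV :: "(real^'n::finite \<Rightarrow> real^'n^'n) \<Rightarrow> (real^'n \<Rightarrow> real^'n) \<Rightarrow> real^'n \<Rightarrow> real^'n" where
  "boxV g V x = (\<chi> a. - (\<Sum>c\<in>UNIV. \<Sum>d\<in>UNIV. ginv g x $ c $ d *
      covD g [False, True] (covD g [True] (vt V)) [c, d, a] x))"

definition boxT :: "(real^'n::finite \<Rightarrow> real^'n^'n) \<Rightarrow> ('n \<Rightarrow> 'n \<Rightarrow> real^'n \<Rightarrow> real)
    \<Rightarrow> 'n \<Rightarrow> 'n \<Rightarrow> real^'n \<Rightarrow> real" where
  "boxT g u a b x = - (\<Sum>c\<in>UNIV. \<Sum>d\<in>UNIV. ginv g x $ c $ d *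
      covD g [False, False, False] (covD g [False, False] (t2 u)) [c, d, a, b] x)"

definition divV :: "(real^'n::finite \<Rightarrow> real^'n^'n) \<Rightarrow> (real^'n \<Rightarrow> real^'n) \<Rightarrow> real^'n \<Rightarrow> real" where
  "divV g V x = (\<Sum>a\<in>UNIV. covD g [True] (vt V) [a, a] x)"

definition divT :: "(real^'n::finite \<Rightarrow> real^'n^'n) \<Rightarrow> ('n \<Rightarrow> 'n \<Rightarrow> real^'n \<Rightarrow> real)
    \<Rightarrow> 'n \<Rightarrow> real^'n \<Rightarrow> real" where
  "divT g u b x = (\<Sum>a\<in>UNIV. \<Sum>c\<in>UNIV. ginv g x $ a $ c * covD g [False, False] (t2 u) [c, a, b] x)"

definition raise :: "(real^'n::finite \<Rightarrow> real^'n^'n) \<Rightarrow> ('n \<Rightarrow> real^'n \<Rightarrow> real) \<Rightarrow> real^'n \<Rightarrow> real^'n" where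
  "raise g w x = (\<chi> a. \<Sum>b\<in>UNIV. ginv g x $ a $ b * w b x)"

definition ricV :: "(real^'n::finite \<Rightarrow> real^'n^'n) \<Rightarrow> (real^'n \<Rightarrow> real^'n) \<Rightarrow> real^'n \<Rightarrow> real^'n" where
  "ricV g V x = (\<chi> a. \<Sum>b\<in>UNIV. \<Sum>c\<in>UNIV. ginv g x $ a $ c * ric g c b x * V x $ b)"

definition riemT :: "(real^'n::finite \<Rightarrow> real^'n^'n) \<Rightarrow> ('n \<Rightarrow> 'n \<Rightarrow> real^'n \<Rightarrow> real)
    \<Rightarrow> 'n \<Rightarrow> 'n \<Rightarrow> real^'n \<Rightarrow> real" where
  "riemT g u a b x = (\<Sum>c\<in>UNIV. \<Sum>d\<in>UNIV. \<Sum>e\<in>UNIV. ginv g x $ c $ e * riem g x a e b d * u c d x)"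

definition ricT :: "(real^'n::finite \<Rightarrow> real^'n^'n) \<Rightarrow> ('n \<Rightarrow> 'n \<Rightarrow> real^'n \<Rightarrow> real)
    \<Rightarrow> 'n \<Rightarrow> 'n \<Rightarrow> real^'n \<Rightarrow> real" where
  "ricT g u a b x = (\<Sum>c\<in>UNIV. \<Sum>d\<in>UNIV. ginv g x $ c $ d * ric g a d x * u c b x)"

definition symT :: "('n \<Rightarrow> 'n \<Rightarrow> real^'n \<Rightarrow> real) \<Rightarrow> 'n \<Rightarrow> 'n \<Rightarrow> real^'n \<Rightarrow> real" where
  "symT u a b x = (u a b x + u b a x) / 2"

end

theory Submission
  imports Defs
begin

text \<open>Everything is computed in a single chart: tensors are arrays of smooth coordinate functions
  and \<open>\<nabla>\<close> is given by the Christoffel symbols. Put \<open>N = \<nabla>V\<^sup>\<flat>\<close>. Torsion-freeness and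
  \<open>\<nabla>g = 0\<close> give \<open>\<L>\<^sub>V g = N + N\<^sup>T\<close>, and likewise \<open>\<L>\<^sub>V Ric\<close> is expressed through \<open>\<nabla>Ric\<close> and \<open>\<nabla>V\<close>.
  For the first identity, \<open>div(\<L>\<^sub>V g - div V g)\<^sub>b = \<nabla>\<^sup>a\<nabla>\<^sub>a V\<^sub>b + \<nabla>\<^sup>a\<nabla>\<^sub>b V\<^sub>a - \<nabla>\<^sub>b div V\<close>,
  and the Ricci identity turns the middle term into \<open>\<nabla>\<^sub>b div V + R\<^sub>b\<^sub>a V\<^sup>a\<close>.
  For the second, \<open>\<nabla>\<^sup>c\<nabla>\<^sub>c\<close> is commuted past the outer derivative of \<open>\<nabla>\<^sub>a V\<^sub>b\<close> using the
  Ricci identities for 1-forms and 2-tensors; the resulting \<open>\<nabla>Riem\<close> terms are converted into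
  \<open>\<nabla>Ric\<close> by the contracted second Bianchi identity, and the remaining curvature terms regroup
  into \<open>Riem(\<L>\<^sub>V g)\<close> and \<open>Ric\<^sup>\<sharp>(\<L>\<^sub>V g)\<close>. The only analytic input is the symmetry of mixed
  partial derivatives, on which the Ricci identities rest.\<close>

lemma sum_delta_mult [simp]:
  fixes f :: "'a::finite \<Rightarrow> real"
  shows "(\<Sum>l\<in>UNIV. (if c = l then 1 else 0) * f l) = f c"
    and "(\<Sum>l\<in>UNIV. (if l = c then 1 else 0) * f l) = f c"
    and "(\<Sum>l\<in>UNIV. f l * (if c = l then 1 else 0)) = f c"
    and "(\<Sum>l\<in>UNIV. f l * (if l = c then 1 else 0)) = f c"
  by (simp_all add: if_distrib[of "\<lambda>a. a * _"] if_distrib[of "\<lambda>a. _ * a"] cong: if_cong)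

lemma length_eq_1D: "length js = Suc 0 \<Longrightarrow> \<exists>a. js = [a]"
  by (cases js) auto

lemma length_eq_2D: "length js = Suc (Suc 0) \<Longrightarrow> \<exists>a b. js = [a, b]"
  by (cases js; cases "tl js") auto

lemma length_eq_3D: "length js = Suc (Suc (Suc 0)) \<Longrightarrow> \<exists>a b c. js = [a, b, c]"
  by (cases js; cases "tl js"; cases "tl (tl js)") auto

lemma length_eq_4D: "length js = Suc (Suc (Suc (Suc 0))) \<Longrightarrow> \<exists>a b c d. js = [a, b, c, d]"
  by (cases js; cases "tl js"; cases "tl (tl js)"; cases "tl (tl (tl js))") auto

lemma sum_sum_distrib4: "(\<Sum>c\<in>UNIV. \<Sum>d\<in>UNIV. (G c d :: real) * (A c d + B c d + C c d + D c d))
   = (\<Sum>c\<in>UNIV. \<Sum>d\<in>UNIV. G c d * A c d) + (\<Sum>c\<in>UNIV. \<Sum>d\<in>UNIV. G c d * B c d)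
   + (\<Sum>c\<in>UNIV. \<Sum>d\<in>UNIV. G c d * C c d) + (\<Sum>c\<in>UNIV. \<Sum>d\<in>UNIV. G c d * D c d)"
  by (simp add: distrib_left sum.distrib)

lemma sum3_132: "(\<Sum>a\<in>A. \<Sum>b\<in>B. \<Sum>c\<in>C. F a b c) = (\<Sum>a\<in>A. \<Sum>c\<in>C. \<Sum>b\<in>B. F a b c)"
  by (rule sum.cong[OF refl], rule sum.swap)

lemma sum3_312: "(\<Sum>a\<in>A. \<Sum>b\<in>B. \<Sum>c\<in>C. F a b c) = (\<Sum>c\<in>C. \<Sum>a\<in>A. \<Sum>b\<in>B. F a b c)"
  by (subst sum3_132) (rule sum.swap)

lemma sum3_321: "(\<Sum>a\<in>A. \<Sum>b\<in>B. \<Sum>c\<in>C. F a b c) = (\<Sum>c\<in>C. \<Sum>b\<in>B. \<Sum>a\<in>A. F a b c)"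
  by (subst sum3_312) (rule sum3_132)

lemma sum3_231: "(\<Sum>a\<in>A. \<Sum>b\<in>B. \<Sum>c\<in>C. F a b c) = (\<Sum>b\<in>B. \<Sum>c\<in>C. \<Sum>a\<in>A. F a b c)"
  by (subst sum.swap) (rule sum3_132)

section \<open>Partial derivatives and smoothness\<close>

lemma pds_append: "pds (is @ [i]) f = pds is (pd i f)"
  by (induction "is") auto

lemma pd_eqI:
  assumes "((\<lambda>t. F (x + t *\<^sub>R axis i 1)) has_real_derivative D) (at 0)"
  shows "pd i F x = D"
  unfolding pd_def using assms by (rule DERIV_imp_deriv)

lemma pd_const [simp]: "pd i (\<lambda>y. c) x = 0"
  by (rule pd_eqI) simp

definition partials_on :: "(real^'n::finite) set \<Rightarrow> (real^'n \<Rightarrow> real) \<Rightarrow> bool" where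
  "partials_on U f \<longleftrightarrow> (\<forall>x\<in>U. \<forall>i. ((\<lambda>t. f (x + t *\<^sub>R axis i 1)) has_real_derivative pd i f x) (at 0))"

text \<open>A finite-order version of \<^const>\<open>smooth_on\<close> (see \<open>smooth_on_iff_smooth_upto\<close>): the closure
  properties of smoothness are proved by induction on the order.\<close>
fun smooth_upto :: "(real^'n::finite) set \<Rightarrow> nat \<Rightarrow> (real^'n \<Rightarrow> real) \<Rightarrow> bool" where
  "smooth_upto U 0 f \<longleftrightarrow> continuous_on U f \<and> partials_on U f"
| "smooth_upto U (Suc n) f \<longleftrightarrow> smooth_upto U 0 f \<and> (\<forall>i. smooth_upto U n (pd i f))"

lemma smooth_upto_0D: "smooth_upto U n f \<Longrightarrow> smooth_upto U 0 f"
  by (cases n) auto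

lemma smooth_upto_SucD: "smooth_upto U (Suc n) f \<Longrightarrow> smooth_upto U n f"
  by (induction n arbitrary: f) (auto intro: smooth_upto_0D)

lemma smooth_upto_pds: "smooth_upto U n f \<Longrightarrow> length is \<le> n \<Longrightarrow> smooth_upto U 0 (pds is f)"
proof (induction "is" arbitrary: n f rule: rev_induct)
  case Nil then show ?case using smooth_upto_0D by simp
next
  case (snoc i "is")
  then obtain m where "n = Suc m" by (cases n) auto
  with snoc show ?case by (auto simp: pds_append)
qed

lemma smooth_on_pd:
  assumes "smooth_on U f"
  shows "smooth_on U (pd i f)"
  unfolding smooth_on_def
proof
  fix "is"
  show "continuous_on U (pds is (pd i f)) \<and>
      (\<forall>j. \<forall>x\<in>U. ((\<lambda>t. pds is (pd i f) (x + t *\<^sub>R axis j 1)) has_real_derivative pds (j # is) (pd i f) x) (at 0))"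
    using spec[OF assms[unfolded smooth_on_def], of "is @ [i]"] by (simp add: pds_append)
qed

lemma smooth_on_iff_smooth_upto: "smooth_on U f \<longleftrightarrow> (\<forall>n. smooth_upto U n f)"
proof
  have base: "smooth_upto U 0 f" if "smooth_on U f" for f
    using spec[OF that[unfolded smooth_on_def], of "[]"] by (simp add: partials_on_def)
  have "smooth_upto U n f" if "smooth_on U f" for n f
    using that
  proof (induction n arbitrary: f)
    case 0 then show ?case by (rule base)
  next
    case (Suc n)
    then show ?case using Suc.IH[OF smooth_on_pd[OF Suc.prems]] base by simp
  qed
  moreover assume "smooth_on U f"
  ultimately show "\<forall>n. smooth_upto U n f" by blast
next
  assume "\<forall>n. smooth_upto U n f"
  then have "smooth_upto U 0 (pds is f)" for "is" using smooth_upto_pds by blast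
  then show "smooth_on U f" unfolding smooth_on_def by (simp add: partials_on_def)
qed

lemma partials_on_add:
  assumes "partials_on U f" "partials_on U h"
  shows "partials_on U (\<lambda>y. f y + h y)" and "x \<in> U \<Longrightarrow> pd i (\<lambda>y. f y + h y) x = pd i f x + pd i h x"
proof -
  have D: "((\<lambda>t. f (x + t *\<^sub>R axis i 1) + h (x + t *\<^sub>R axis i 1)) has_real_derivative pd i f x + pd i h x) (at 0)"
    if "x \<in> U" for x i using assms that unfolding partials_on_def by (intro DERIV_add) auto
  have P: "pd i (\<lambda>y. f y + h y) x = pd i f x + pd i h x" if "x \<in> U" for x i
    using D[OF that] by (rule pd_eqI)
  then show "x \<in> U \<Longrightarrow> pd i (\<lambda>y. f y + h y) x = pd i f x + pd i h x" .
  from D P show "partials_on U (\<lambda>y. f y + h y)" unfolding partials_on_def by simp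
qed

lemma partials_on_mult:
  assumes "partials_on U f" "partials_on U h"
  shows "partials_on U (\<lambda>y. f y * h y)"
    and "x \<in> U \<Longrightarrow> pd i (\<lambda>y. f y * h y) x = pd i f x * h x + f x * pd i h x"
proof -
  have D: "((\<lambda>t. f (x + t *\<^sub>R axis i 1) * h (x + t *\<^sub>R axis i 1)) has_real_derivative pd i f x * h x + f x * pd i h x) (at 0)"
    if "x \<in> U" for x i
  proof -
    have "((\<lambda>t. f (x + t *\<^sub>R axis i 1)) has_real_derivative pd i f x) (at 0)"
      and "((\<lambda>t. h (x + t *\<^sub>R axis i 1)) has_real_derivative pd i h x) (at 0)"
      using assms that unfolding partials_on_def by auto
    from DERIV_mult[OF this] show ?thesis by (simp add: algebra_simps)
  qed
  have P: "pd i (\<lambda>y. f y * h y) x = pd i f x * h x + f x * pd i h x" if "x \<in> U" for x i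
    using D[OF that] by (rule pd_eqI)
  then show "x \<in> U \<Longrightarrow> pd i (\<lambda>y. f y * h y) x = pd i f x * h x + f x * pd i h x" .
  from D P show "partials_on U (\<lambda>y. f y * h y)" unfolding partials_on_def by simp
qed

lemma partials_on_inverse:
  assumes "partials_on U f" "\<And>y. y \<in> U \<Longrightarrow> f y \<noteq> 0"
  shows "partials_on U (\<lambda>y. inverse (f y))"
    and "x \<in> U \<Longrightarrow> pd i (\<lambda>y. inverse (f y)) x = - (pd i f x * (inverse (f x) * inverse (f x)))"
proof -
  have D: "((\<lambda>t. inverse (f (x + t *\<^sub>R axis i 1))) has_real_derivative - (pd i f x * (inverse (f x) * inverse (f x)))) (at 0)"
    if "x \<in> U" for x i
    using DERIV_inverse_fun[of "\<lambda>t. f (x + t *\<^sub>R axis i 1)" _ 0] assms that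
    unfolding partials_on_def by (simp add: power2_eq_square)
  have P: "pd i (\<lambda>y. inverse (f y)) x = - (pd i f x * (inverse (f x) * inverse (f x)))"
    if "x \<in> U" for x i using D[OF that] by (rule pd_eqI)
  then show "x \<in> U \<Longrightarrow> pd i (\<lambda>y. inverse (f y)) x = - (pd i f x * (inverse (f x) * inverse (f x)))" .
  from D P show "partials_on U (\<lambda>y. inverse (f y))" unfolding partials_on_def by simp
qed

lemma smooth_upto_const: "smooth_upto U n (\<lambda>y. c)"
proof -
  have pd_zero: "pd i (\<lambda>y. c) = (\<lambda>y. 0)" for i c by (rule ext) simp
  show ?thesis by (induction n arbitrary: c) (auto simp: pd_zero partials_on_def)
qed

lemma smooth_on_const: "smooth_on U (\<lambda>y. c)"
  by (simp add: smooth_on_iff_smooth_upto smooth_upto_const)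

lemma smooth_on_partials_on: "smooth_on U f \<Longrightarrow> partials_on U f"
  using smooth_upto.simps(1)[of U f] unfolding smooth_on_iff_smooth_upto by blast

lemma smooth_on_continuous_on: "smooth_on U f \<Longrightarrow> continuous_on U f"
  using smooth_upto.simps(1)[of U f] unfolding smooth_on_iff_smooth_upto by blast

lemma partials_on_line_derivative:
  assumes "partials_on U f" "p + t0 *\<^sub>R axis i 1 \<in> U"
  shows "((\<lambda>t. f (p + t *\<^sub>R axis i 1)) has_real_derivative pd i f (p + t0 *\<^sub>R axis i 1)) (at t0)"
proof -
  let ?e = "axis i 1 :: real^'a"
  have "((\<lambda>s. f ((p + t0 *\<^sub>R ?e) + s *\<^sub>R ?e)) has_real_derivative pd i f (p + t0 *\<^sub>R ?e)) (at 0)"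
    using assms unfolding partials_on_def by blast
  moreover have "(\<lambda>s. f ((p + t0 *\<^sub>R ?e) + s *\<^sub>R ?e)) = (\<lambda>s. f (p + (s + t0) *\<^sub>R ?e))"
    by (rule ext) (simp add: scaleR_add_left algebra_simps)
  ultimately show ?thesis using DERIV_shift[of "\<lambda>t. f (p + t *\<^sub>R ?e)" _ 0 t0] by simp
qed

lemma mixed_difference_mvt:
  fixes x :: "real^'n::finite"
  assumes "smooth_on U f" "h > 0"
    and in_U: "\<And>t s. 0 \<le> t \<Longrightarrow> t \<le> h \<Longrightarrow> 0 \<le> s \<Longrightarrow> s \<le> h \<Longrightarrow> x + t *\<^sub>R axis i 1 + s *\<^sub>R axis j 1 \<in> U"
  obtains t s where "0 < t" "t < h" "0 < s" "s < h"
    "f (x + h *\<^sub>R axis i 1 + h *\<^sub>R axis j 1) - f (x + h *\<^sub>R axis i 1) - f (x + h *\<^sub>R axis j 1) + f x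
       = h * h * pd j (pd i f) (x + t *\<^sub>R axis i 1 + s *\<^sub>R axis j 1)"
proof -
  let ?ei = "axis i 1 :: real^'n" and ?ej = "axis j 1 :: real^'n"
  have hf: "partials_on U f" and hf1: "partials_on U (pd i f)"
    using assms(1) smooth_on_partials_on smooth_on_pd by blast+
  define \<phi> where "\<phi> t = f ((x + h *\<^sub>R ?ej) + t *\<^sub>R ?ei) - f (x + t *\<^sub>R ?ei)" for t
  have "\<exists>t. 0 < t \<and> t < h \<and> \<phi> h - \<phi> 0 = (h - 0) * (pd i f ((x + h *\<^sub>R ?ej) + t *\<^sub>R ?ei) - pd i f (x + t *\<^sub>R ?ei))"
    unfolding \<phi>_def
  proof (rule MVT2[OF assms(2)])
    fix t :: real assume t: "0 \<le> t" "t \<le> h"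
    have "(x + h *\<^sub>R ?ej) + t *\<^sub>R ?ei \<in> U" using in_U[of t h] t assms(2) by (simp add: algebra_simps)
    moreover have "x + t *\<^sub>R ?ei \<in> U" using in_U[of t 0] t by simp
    ultimately show "((\<lambda>t. f ((x + h *\<^sub>R ?ej) + t *\<^sub>R ?ei) - f (x + t *\<^sub>R ?ei)) has_real_derivative
        pd i f ((x + h *\<^sub>R ?ej) + t *\<^sub>R ?ei) - pd i f (x + t *\<^sub>R ?ei)) (at t)"
      by (intro DERIV_diff partials_on_line_derivative[OF hf])
  qed
  then obtain t where t: "0 < t" "t < h"
    and mvt1: "\<phi> h - \<phi> 0 = h * (pd i f ((x + h *\<^sub>R ?ej) + t *\<^sub>R ?ei) - pd i f (x + t *\<^sub>R ?ei))"
    by auto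
  have "\<exists>s. 0 < s \<and> s < h \<and> pd i f ((x + t *\<^sub>R ?ei) + h *\<^sub>R ?ej) - pd i f ((x + t *\<^sub>R ?ei) + 0 *\<^sub>R ?ej)
       = (h - 0) * pd j (pd i f) ((x + t *\<^sub>R ?ei) + s *\<^sub>R ?ej)"
  proof (rule MVT2[OF assms(2)])
    fix s :: real assume "0 \<le> s" "s \<le> h"
    then have "(x + t *\<^sub>R ?ei) + s *\<^sub>R ?ej \<in> U" using in_U[of t s] t by simp
    then show "((\<lambda>s. pd i f ((x + t *\<^sub>R ?ei) + s *\<^sub>R ?ej)) has_real_derivative pd j (pd i f) ((x + t *\<^sub>R ?ei) + s *\<^sub>R ?ej)) (at s)"
      by (rule partials_on_line_derivative[OF hf1])
  qed
  then obtain s where s: "0 < s" "s < h"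
    and mvt2: "pd i f ((x + t *\<^sub>R ?ei) + h *\<^sub>R ?ej) - pd i f ((x + t *\<^sub>R ?ei) + 0 *\<^sub>R ?ej)
       = h * pd j (pd i f) ((x + t *\<^sub>R ?ei) + s *\<^sub>R ?ej)" by auto
  have "(x + h *\<^sub>R ?ej) + t *\<^sub>R ?ei = (x + t *\<^sub>R ?ei) + h *\<^sub>R ?ej" by (simp add: algebra_simps)
  with mvt1 mvt2 have "\<phi> h - \<phi> 0 = h * h * pd j (pd i f) (x + t *\<^sub>R ?ei + s *\<^sub>R ?ej)" by simp
  moreover have "\<phi> h - \<phi> 0 = f (x + h *\<^sub>R ?ei + h *\<^sub>R ?ej) - f (x + h *\<^sub>R ?ei) - f (x + h *\<^sub>R ?ej) + f x"
    unfolding \<phi>_def by (simp add: algebra_simps)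
  ultimately show ?thesis using that[OF t s] by simp
qed

lemma dist_axis_square:
  fixes x :: "real^'n::finite"
  assumes "0 \<le> t" "0 \<le> s"
  shows "dist (x + t *\<^sub>R axis a 1 + s *\<^sub>R axis b 1) x \<le> t + s"
proof -
  have "dist (x + t *\<^sub>R axis a 1 + s *\<^sub>R axis b 1) x = norm (t *\<^sub>R (axis a 1 :: real^'n) + s *\<^sub>R axis b 1)"
    by (simp add: dist_norm)
  also have "\<dots> \<le> norm (t *\<^sub>R (axis a 1 :: real^'n)) + norm (s *\<^sub>R (axis b 1 :: real^'n))"
    by (rule norm_triangle_ineq)
  also have "\<dots> = t + s" using assms by simp
  finally show ?thesis .
qed

locale open_chart =
  fixes U :: "(real^'n::finite) set"
  assumes open_U: "open U"
begin

abbreviation smooth :: "(real^'n \<Rightarrow> real) \<Rightarrow> bool" where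
  "smooth f \<equiv> smooth_on U f"

lemma eventually_line_eq:
  assumes "x \<in> U" "\<And>y. y \<in> U \<Longrightarrow> f y = h y"
  shows "eventually (\<lambda>t. f (x + t *\<^sub>R v) = h (x + t *\<^sub>R v)) (nhds 0)"
proof -
  have "open ((\<lambda>t::real. x + t *\<^sub>R v) -` U)"
    by (rule open_vimage[OF open_U]) (intro continuous_intros)
  then have "eventually (\<lambda>t. x + t *\<^sub>R v \<in> U) (nhds 0)"
    using eventually_nhds_in_open[of _ 0] assms(1) by fastforce
  then show ?thesis by eventually_elim (use assms in auto)
qed

lemma pd_cong:
  assumes "x \<in> U" "\<And>y. y \<in> U \<Longrightarrow> f y = h y"
  shows "pd i f x = pd i h x"
proof -
  have "DERIV (\<lambda>t. f (x + t *\<^sub>R axis i 1)) 0 :> D \<longleftrightarrow> DERIV (\<lambda>t. h (x + t *\<^sub>R axis i 1)) 0 :> D" for D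
    by (rule DERIV_cong_ev[OF refl eventually_line_eq[OF assms] refl])
  then show ?thesis unfolding pd_def deriv_def by simp
qed

lemma partials_on_cong:
  assumes "\<And>y. y \<in> U \<Longrightarrow> f y = h y" "partials_on U f"
  shows "partials_on U h"
  unfolding partials_on_def
proof (intro ballI allI)
  fix x i assume x: "x \<in> U"
  have ev: "eventually (\<lambda>t. f (x + t *\<^sub>R axis i 1) = h (x + t *\<^sub>R axis i 1)) (nhds 0)"
    by (rule eventually_line_eq[OF x assms(1)])
  have "((\<lambda>t. f (x + t *\<^sub>R axis i 1)) has_real_derivative pd i f x) (at 0)"
    using assms(2) x by (simp add: partials_on_def)
  moreover have "pd i f x = pd i h x" using pd_cong[of x f h i] assms(1) x by blast
  ultimately have "((\<lambda>t. f (x + t *\<^sub>R axis i 1)) has_real_derivative pd i h x) (at 0)" by simp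
  then show "((\<lambda>t. h (x + t *\<^sub>R axis i 1)) has_real_derivative pd i h x) (at 0)"
    using DERIV_cong_ev[OF refl ev refl] by blast
qed

lemma smooth_upto_cong:
  assumes "\<And>y. y \<in> U \<Longrightarrow> f y = h y" "smooth_upto U n f"
  shows "smooth_upto U n h"
  using assms
proof (induction n arbitrary: f h)
  case 0
  then have f: "continuous_on U f" "partials_on U f" by simp_all
  have "continuous_on U h" using f(1) 0(1) by (rule continuous_on_eq)
  moreover have "partials_on U h" using 0(1) f(2) by (rule partials_on_cong)
  ultimately show ?case by simp
next
  case (Suc n)
  then have f: "continuous_on U f" "partials_on U f" "\<And>i. smooth_upto U n (pd i f)" by simp_all
  have "continuous_on U h" using f(1) Suc.prems(1) by (rule continuous_on_eq)
  moreover have "partials_on U h" using Suc.prems(1) f(2) by (rule partials_on_cong)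
  moreover have "smooth_upto U n (pd i h)" for i
    using Suc.IH[of "pd i f" "pd i h"] f(3) pd_cong Suc.prems(1) by blast
  ultimately show ?case by simp
qed

lemma smooth_upto_add: "smooth_upto U n f \<Longrightarrow> smooth_upto U n h \<Longrightarrow> smooth_upto U n (\<lambda>y. f y + h y)"
proof (induction n arbitrary: f h)
  case 0 then show ?case by (auto intro: continuous_on_add partials_on_add)
next
  case (Suc n)
  have "smooth_upto U n (pd i (\<lambda>y. f y + h y))" for i
  proof (rule smooth_upto_cong)
    show "smooth_upto U n (\<lambda>y. pd i f y + pd i h y)" using Suc by simp
    show "\<And>y. y \<in> U \<Longrightarrow> pd i f y + pd i h y = pd i (\<lambda>y. f y + h y) y"
      using partials_on_add(2)[of U f h] Suc.prems by simp
  qed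
  with Suc.prems show ?case by (auto intro: continuous_on_add partials_on_add)
qed

lemma smooth_upto_mult: "smooth_upto U n f \<Longrightarrow> smooth_upto U n h \<Longrightarrow> smooth_upto U n (\<lambda>y. f y * h y)"
proof (induction n arbitrary: f h)
  case 0 then show ?case by (auto intro: continuous_on_mult partials_on_mult)
next
  case (Suc n)
  have "smooth_upto U n (pd i (\<lambda>y. f y * h y))" for i
  proof (rule smooth_upto_cong)
    have "smooth_upto U n (pd i f)" "smooth_upto U n h" "smooth_upto U n f" "smooth_upto U n (pd i h)"
      using Suc.prems smooth_upto_SucD by auto
    then show "smooth_upto U n (\<lambda>y. pd i f y * h y + f y * pd i h y)"
      using Suc.IH smooth_upto_add by simp
    show "\<And>y. y \<in> U \<Longrightarrow> pd i f y * h y + f y * pd i h y = pd i (\<lambda>y. f y * h y) y"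
      using partials_on_mult(2)[of U f h] Suc.prems by simp
  qed
  with Suc.prems show ?case by (auto intro: continuous_on_mult partials_on_mult)
qed

lemma smooth_upto_inverse:
  assumes nz: "\<And>y. y \<in> U \<Longrightarrow> f y \<noteq> 0"
  shows "smooth_upto U n f \<Longrightarrow> smooth_upto U n (\<lambda>y. inverse (f y))"
proof (induction n)
  case 0
  then have "continuous_on U f" "partials_on U f" by simp_all
  then show ?case using nz by (simp add: continuous_on_inverse partials_on_inverse(1))
next
  case (Suc n)
  have "smooth_upto U n (pd i (\<lambda>y. inverse (f y)))" for i
  proof (rule smooth_upto_cong)
    have df: "smooth_upto U n (pd i f)" and inv: "smooth_upto U n (\<lambda>y. inverse (f y))"
      using Suc smooth_upto_SucD by auto
    show "smooth_upto U n (\<lambda>y. (-1) * (pd i f y * (inverse (f y) * inverse (f y))))"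
      by (rule smooth_upto_mult[OF smooth_upto_const smooth_upto_mult[OF df smooth_upto_mult[OF inv inv]]])
    show "\<And>y. y \<in> U \<Longrightarrow> (-1) * (pd i f y * (inverse (f y) * inverse (f y))) = pd i (\<lambda>y. inverse (f y)) y"
      using partials_on_inverse(2)[of U f] Suc.prems nz by simp
  qed
  moreover have "smooth_upto U 0 (\<lambda>y. inverse (f y))"
    using Suc smooth_upto_SucD smooth_upto_0D by blast
  ultimately show ?case by simp
qed

lemma smooth_add [simp]: "smooth f \<Longrightarrow> smooth h \<Longrightarrow> smooth (\<lambda>y. f y + h y)"
  by (simp add: smooth_on_iff_smooth_upto smooth_upto_add)

lemma smooth_mult [simp]: "smooth f \<Longrightarrow> smooth h \<Longrightarrow> smooth (\<lambda>y. f y * h y)"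
  by (simp add: smooth_on_iff_smooth_upto smooth_upto_mult)

lemma smooth_const [simp]: "smooth (\<lambda>y. c)"
  by (rule smooth_on_const)

lemma smooth_minus [simp]: "smooth f \<Longrightarrow> smooth (\<lambda>y. - f y)"
  using smooth_mult[OF smooth_const, of f "-1"] by simp

lemma smooth_diff [simp]:
  assumes "smooth f" "smooth h"
  shows "smooth (\<lambda>y. f y - h y)"
proof -
  have "smooth (\<lambda>y. f y + - h y)" using assms by (intro smooth_add smooth_minus)
  then show ?thesis by simp
qed

lemma smooth_divide_const [simp]: "smooth f \<Longrightarrow> smooth (\<lambda>y. f y / c)"
  using smooth_mult[OF _ smooth_const, of f "inverse c"] by (simp add: divide_inverse)

lemma smooth_divide:
  assumes "smooth f" "smooth h" "\<And>y. y \<in> U \<Longrightarrow> h y \<noteq> 0"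
  shows "smooth (\<lambda>y. f y / h y)"
proof -
  have "smooth (\<lambda>y. inverse (h y))"
    using assms(2) smooth_upto_inverse[of h, OF assms(3)] unfolding smooth_on_iff_smooth_upto by blast
  with assms(1) have "smooth (\<lambda>y. f y * inverse (h y))" by (rule smooth_mult)
  then show ?thesis by (simp add: divide_inverse)
qed

lemma smooth_cong:
  assumes "\<And>y. y \<in> U \<Longrightarrow> f y = h y" "smooth f"
  shows "smooth h"
  using assms(2) smooth_upto_cong[OF assms(1)] by (simp add: smooth_on_iff_smooth_upto)

lemma smooth_sum [simp]: "finite A \<Longrightarrow> (\<And>k. k \<in> A \<Longrightarrow> smooth (F k)) \<Longrightarrow> smooth (\<lambda>y. \<Sum>k\<in>A. F k y)"
  by (induction A rule: finite_induct) auto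

lemma smooth_prod: "finite A \<Longrightarrow> (\<And>k. k \<in> A \<Longrightarrow> smooth (F k)) \<Longrightarrow> smooth (\<lambda>y. \<Prod>k\<in>A. F k y)"
  by (induction A rule: finite_induct) auto

lemma smooth_if [simp]: "smooth f \<Longrightarrow> smooth h \<Longrightarrow> smooth (\<lambda>y. if P then f y else h y)"
  by (cases P) auto

lemma smooth_pd [simp]: "smooth f \<Longrightarrow> smooth (pd i f)"
  by (rule smooth_on_pd)

lemma pd_add [simp]: "x \<in> U \<Longrightarrow> smooth f \<Longrightarrow> smooth h \<Longrightarrow> pd i (\<lambda>y. f y + h y) x = pd i f x + pd i h x"
  using partials_on_add(2)[OF smooth_on_partials_on smooth_on_partials_on] by blast

lemma pd_mult [simp]: "x \<in> U \<Longrightarrow> smooth f \<Longrightarrow> smooth h \<Longrightarrow> pd i (\<lambda>y. f y * h y) x = pd i f x * h x + f x * pd i h x"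
  using partials_on_mult(2)[OF smooth_on_partials_on smooth_on_partials_on] by blast

lemma pd_minus [simp]: "x \<in> U \<Longrightarrow> smooth f \<Longrightarrow> pd i (\<lambda>y. - f y) x = - pd i f x"
  using pd_mult[OF _ smooth_const, of x f i "-1"] by simp

lemma pd_diff [simp]: "x \<in> U \<Longrightarrow> smooth f \<Longrightarrow> smooth h \<Longrightarrow> pd i (\<lambda>y. f y - h y) x = pd i f x - pd i h x"
  using pd_add[of x f "\<lambda>y. - h y" i] by simp

lemma pd_divide_const [simp]: "x \<in> U \<Longrightarrow> smooth f \<Longrightarrow> pd i (\<lambda>y. f y / c) x = pd i f x / c"
  using pd_mult[of x f "\<lambda>y. inverse c" i] by (simp add: divide_inverse)

lemma pd_sum [simp]:
  assumes "x \<in> U"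
  shows "finite A \<Longrightarrow> (\<And>k. k \<in> A \<Longrightarrow> smooth (F k)) \<Longrightarrow> pd i (\<lambda>y. \<Sum>k\<in>A. F k y) x = (\<Sum>k\<in>A. pd i (F k) x)"
  by (induction A rule: finite_induct) (use assms in auto)

lemma pd_if [simp]: "pd i (\<lambda>y. if P then f y else h y) x = (if P then pd i f x else pd i h x)"
  by (cases P) auto

lemma smooth_eps_delta:
  assumes "smooth f" "x \<in> U" "e > 0"
  obtains d where "d > 0" "\<And>y. dist y x < d \<Longrightarrow> \<bar>f y - f x\<bar> < e"
proof -
  have "continuous (at x) f"
    using smooth_on_continuous_on[OF assms(1)] open_U assms(2) continuous_on_eq_continuous_at by blast
  then obtain d where "d > 0" "\<forall>y. dist y x < d \<longrightarrow> dist (f y) (f x) < e"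
    using assms(3) unfolding continuous_at_eps_delta by blast
  then show ?thesis by (intro that[of d]) (simp_all add: dist_real_def)
qed

text \<open>Both mixed partials, multiplied by \<open>h\<^sup>2\<close>, equal the same second difference of \<open>f\<close>
  (\<open>mixed_difference_mvt\<close> in the two orders), at points that tend to \<open>x\<close> with \<open>h\<close>.\<close>
lemma mixed_partials_close:
  assumes x: "x \<in> U" and f: "smooth f" and e: "e > 0"
  shows "\<bar>pd j (pd i f) x - pd i (pd j f) x\<bar> < 2 * e"
proof -
  let ?ei = "axis i 1 :: real^'n" and ?ej = "axis j 1 :: real^'n"
  have "smooth (pd j (pd i f))" using f by simp
  then obtain d1 where d1: "d1 > 0" "\<And>y. dist y x < d1 \<Longrightarrow> \<bar>pd j (pd i f) y - pd j (pd i f) x\<bar> < e"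
    using x e by (rule smooth_eps_delta) blast
  have "smooth (pd i (pd j f))" using f by simp
  then obtain d2 where d2: "d2 > 0" "\<And>y. dist y x < d2 \<Longrightarrow> \<bar>pd i (pd j f) y - pd i (pd j f) x\<bar> < e"
    using x e by (rule smooth_eps_delta) blast
  obtain d0 where d0: "d0 > 0" "ball x d0 \<subseteq> U" using open_U x open_contains_ball by blast
  define h where "h = min d0 (min d1 d2) / 3"
  have h: "h > 0" using d0 d1 d2 by (simp add: h_def)
  have near: "dist (x + t *\<^sub>R axis a 1 + s *\<^sub>R axis b 1) x < min d0 (min d1 d2)"
    if "0 \<le> t" "t \<le> h" "0 \<le> s" "s \<le> h" for t s a b
    using dist_axis_square[OF that(1,3), of x a b] that h_def h by linarith
  have in_U: "x + t *\<^sub>R axis a 1 + s *\<^sub>R axis b 1 \<in> U" if "0 \<le> t" "t \<le> h" "0 \<le> s" "s \<le> h" for t s a b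
    using near[OF that, of a b] by (intro subsetD[OF d0(2)]) (simp add: dist_commute)
  obtain t1 s1 where ts1: "0 < t1" "t1 < h" "0 < s1" "s1 < h"
    and E1: "f (x + h *\<^sub>R ?ei + h *\<^sub>R ?ej) - f (x + h *\<^sub>R ?ei) - f (x + h *\<^sub>R ?ej) + f x
       = h * h * pd j (pd i f) (x + t1 *\<^sub>R ?ei + s1 *\<^sub>R ?ej)"
    by (rule mixed_difference_mvt[OF f h in_U])
  obtain t2 s2 where ts2: "0 < t2" "t2 < h" "0 < s2" "s2 < h"
    and E2: "f (x + h *\<^sub>R ?ej + h *\<^sub>R ?ei) - f (x + h *\<^sub>R ?ej) - f (x + h *\<^sub>R ?ei) + f x
       = h * h * pd i (pd j f) (x + t2 *\<^sub>R ?ej + s2 *\<^sub>R ?ei)"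
    by (rule mixed_difference_mvt[OF f h in_U])
  have "f (x + h *\<^sub>R ?ej + h *\<^sub>R ?ei) = f (x + h *\<^sub>R ?ei + h *\<^sub>R ?ej)"
    by (rule arg_cong[where f = f]) (simp add: algebra_simps)
  with E1 E2 have "h * h * pd j (pd i f) (x + t1 *\<^sub>R ?ei + s1 *\<^sub>R ?ej) = h * h * pd i (pd j f) (x + t2 *\<^sub>R ?ej + s2 *\<^sub>R ?ei)"
    by linarith
  with h have "pd j (pd i f) (x + t1 *\<^sub>R ?ei + s1 *\<^sub>R ?ej) = pd i (pd j f) (x + t2 *\<^sub>R ?ej + s2 *\<^sub>R ?ei)"
    by simp
  moreover have "\<bar>pd j (pd i f) (x + t1 *\<^sub>R ?ei + s1 *\<^sub>R ?ej) - pd j (pd i f) x\<bar> < e"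
    using d1(2) near[of t1 s1 i j] ts1 by simp
  moreover have "\<bar>pd i (pd j f) (x + t2 *\<^sub>R ?ej + s2 *\<^sub>R ?ei) - pd i (pd j f) x\<bar> < e"
    using d2(2) near[of t2 s2 j i] ts2 by simp
  ultimately show ?thesis by linarith
qed

lemma pd_commute:
  assumes "x \<in> U" "smooth f"
  shows "pd i (pd j f) x = pd j (pd i f) x"
proof (rule ccontr)
  assume "pd i (pd j f) x \<noteq> pd j (pd i f) x"
  then show False
    using mixed_partials_close[OF assms, of "\<bar>pd j (pd i f) x - pd i (pd j f) x\<bar> / 2" i j] by simp
qed

end

section \<open>Metric, inverse metric and Christoffel symbols\<close>

locale metric_chart = open_chart U for U :: "(real^'n::finite) set" +
  fixes g :: "real^'n \<Rightarrow> real^'n^'n"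
  assumes smooth_g [simp]: "smooth_on U (\<lambda>x. g x $ i $ j)"
    and g_sym: "x \<in> U \<Longrightarrow> g x $ i $ j = g x $ j $ i"
    and invertible_g: "x \<in> U \<Longrightarrow> invertible (g x)"
begin

lemma g_ginv_mat:
  assumes "x \<in> U" shows "g x ** ginv g x = mat 1" "ginv g x ** g x = mat 1"
proof -
  have "\<exists>A'. g x ** A' = mat 1 \<and> A' ** g x = mat 1" using invertible_g[OF assms] unfolding invertible_def .
  then have "g x ** matrix_inv (g x) = mat 1 \<and> matrix_inv (g x) ** g x = mat 1"
    unfolding matrix_inv_def by (rule someI_ex)
  then show "g x ** ginv g x = mat 1" "ginv g x ** g x = mat 1" by (auto simp: ginv_def)
qed

lemma g_ginv: "x \<in> U \<Longrightarrow> (\<Sum>k\<in>UNIV. g x $ i $ k * ginv g x $ k $ j) = (if i = j then 1 else 0)"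
  using g_ginv_mat(1)[of x] by (simp add: vec_eq_iff matrix_matrix_mult_def mat_def)

lemma ginv_g: "x \<in> U \<Longrightarrow> (\<Sum>k\<in>UNIV. ginv g x $ i $ k * g x $ k $ j) = (if i = j then 1 else 0)"
  using g_ginv_mat(2)[of x] by (simp add: vec_eq_iff matrix_matrix_mult_def mat_def)

lemma ginv_sym: assumes "x \<in> U" shows "ginv g x $ i $ j = ginv g x $ j $ i"
proof -
  have tg: "transpose (g x) = g x" using g_sym[OF assms] by (simp add: vec_eq_iff transpose_def)
  have h1: "transpose (ginv g x) ** g x = mat 1"
  proof -
    have "transpose (ginv g x) ** g x = transpose (ginv g x) ** transpose (g x)" by (simp only: tg)
    also have "\<dots> = transpose (g x ** ginv g x)" by (simp only: matrix_transpose_mul)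
    also have "\<dots> = mat 1" by (simp only: g_ginv_mat(1)[OF assms] transpose_mat)
    finally show ?thesis .
  qed
  have "transpose (ginv g x) = transpose (ginv g x) ** (g x ** ginv g x)" by (simp only: g_ginv_mat(1)[OF assms] matrix_mul_rid)
  also have "\<dots> = (transpose (ginv g x) ** g x) ** ginv g x" by (simp only: matrix_mul_assoc)
  also have "\<dots> = ginv g x" by (simp only: h1 matrix_mul_lid)
  finally have "transpose (ginv g x) $ i $ j = ginv g x $ i $ j" by simp
  then show ?thesis by (simp add: transpose_def)
qed

lemma smooth_det: fixes M :: "real^'n \<Rightarrow> real^'n^'n"
  assumes A: "\<And>a b. smooth (\<lambda>y. M y $ a $ b)" shows "smooth (\<lambda>y. det (M y))"
proof -
  have P: "smooth (\<lambda>y. of_int (sign p) * (\<Prod>i\<in>UNIV. M y $ i $ p i))" for p :: "'n \<Rightarrow> 'n"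
  proof (rule smooth_mult[OF smooth_const])
    show "smooth (\<lambda>y. \<Prod>i\<in>UNIV. M y $ i $ p i)" by (rule smooth_prod) (simp_all add: A)
  qed
  have "smooth (\<lambda>y. \<Sum>p\<in>{p. p permutes (UNIV::'n set)}. of_int (sign p) * (\<Prod>i\<in>UNIV. M y $ i $ p i))"
    by (rule smooth_sum) (simp_all add: finite_permutations P)
  then show ?thesis unfolding det_def .
qed

lemma ginv_cramer:
  assumes "x \<in> U"
  shows "ginv g x $ i $ j = det (\<chi> a c. if c = i then axis j 1 $ a else g x $ a $ c) / det (g x)"
proof -
  have d: "det (g x) \<noteq> 0" using invertible_g[OF assms] invertible_det_nz by blast
  have "(g x *v (\<chi> k. ginv g x $ k $ j)) $ a = axis j 1 $ a" for a
  proof -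
    have "(g x *v (\<chi> k. ginv g x $ k $ j)) $ a = (\<Sum>k\<in>UNIV. g x $ a $ k * ginv g x $ k $ j)"
      by (simp add: matrix_vector_mult_def)
    also have "\<dots> = (if a = j then 1 else 0)" by (rule g_ginv[OF assms])
    also have "\<dots> = axis j 1 $ a" by (simp add: axis_def)
    finally show ?thesis .
  qed
  then have "g x *v (\<chi> k. ginv g x $ k $ j) = axis j 1" by (simp add: vec_eq_iff)
  then have "(\<chi> k. ginv g x $ k $ j) = (\<chi> k. det (\<chi> a c. if c = k then axis j 1 $ a else g x $ a $ c) / det (g x))"
    using cramer[OF d] by blast
  then have "(\<chi> k. ginv g x $ k $ j) $ i = (\<chi> k. det (\<chi> a c. if c = k then axis j 1 $ a else g x $ a $ c) / det (g x)) $ i"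
    by (rule arg_cong)
  then show ?thesis by simp
qed

lemma smooth_ginv [simp]: "smooth (\<lambda>y. ginv g y $ i $ j)"
proof (rule smooth_cong)
  show "y \<in> U \<Longrightarrow> det (\<chi> a c. if c = i then axis j 1 $ a else g y $ a $ c) / det (g y) = ginv g y $ i $ j" for y
    by (rule ginv_cramer[symmetric])
  have "smooth (\<lambda>y. det (\<chi> a c. if c = i then axis j 1 $ a else g y $ a $ c))"
    by (rule smooth_det) simp
  moreover have "smooth (\<lambda>y. det (g y))" by (rule smooth_det) simp
  moreover have "y \<in> U \<Longrightarrow> det (g y) \<noteq> 0" for y using invertible_g invertible_det_nz by blast
  ultimately show "smooth (\<lambda>y. det (\<chi> a c. if c = i then axis j 1 $ a else g y $ a $ c) / det (g y))"
    by (rule smooth_divide)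
qed

lemma smooth_chr [simp]: "smooth (\<lambda>y. chr g y k i j)"
  unfolding chr_def by simp

lemma pd_g_sym: "x \<in> U \<Longrightarrow> pd c (\<lambda>y. g y $ i $ j) x = pd c (\<lambda>y. g y $ j $ i) x"
  by (rule pd_cong) (auto simp: g_sym)

lemma chr_sym: "x \<in> U \<Longrightarrow> chr g x k i j = chr g x k j i"
  unfolding chr_def by (simp add: pd_g_sym[of x _ i j] add.commute)

lemma pd_chr_sym: "x \<in> U \<Longrightarrow> pd c (\<lambda>y. chr g y k i j) x = pd c (\<lambda>y. chr g y k j i) x"
  by (rule pd_cong) (auto simp: chr_sym)

lemma g_chr: assumes "x \<in> U"
  shows "(\<Sum>d\<in>UNIV. g x $ c $ d * chr g x d a b) =
     (pd a (\<lambda>y. g y $ b $ c) x + pd b (\<lambda>y. g y $ a $ c) x - pd c (\<lambda>y. g y $ a $ b) x) / 2"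
proof -
  let ?P = "\<lambda>l. pd a (\<lambda>y. g y $ b $ l) x + pd b (\<lambda>y. g y $ a $ l) x - pd l (\<lambda>y. g y $ a $ b) x"
  have "(\<Sum>d\<in>UNIV. g x $ c $ d * chr g x d a b) = (\<Sum>d\<in>UNIV. \<Sum>l\<in>UNIV. g x $ c $ d * ginv g x $ d $ l * ?P l) / 2"
    unfolding chr_def by (simp add: sum_distrib_left sum_divide_distrib mult.assoc)
  also have "\<dots> = (\<Sum>l\<in>UNIV. (\<Sum>d\<in>UNIV. g x $ c $ d * ginv g x $ d $ l) * ?P l) / 2"
    by (subst sum.swap) (simp add: sum_distrib_right)
  also have "\<dots> = (\<Sum>l\<in>UNIV. (if c = l then 1 else 0) * ?P l) / 2" by (simp only: g_ginv[OF assms])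
  also have "\<dots> = ?P c / 2" by (simp only: sum_delta_mult)
  finally show ?thesis .
qed

lemma pd_g: assumes "x \<in> U"
  shows "pd c (\<lambda>y. g y $ a $ b) x = (\<Sum>d\<in>UNIV. chr g x d c a * g x $ d $ b) + (\<Sum>d\<in>UNIV. chr g x d c b * g x $ a $ d)"
proof -
  have 1: "(\<Sum>d\<in>UNIV. chr g x d c a * g x $ d $ b) = (\<Sum>d\<in>UNIV. g x $ b $ d * chr g x d c a)"
    using g_sym[OF assms] by (simp add: mult.commute)
  have 2: "(\<Sum>d\<in>UNIV. chr g x d c b * g x $ a $ d) = (\<Sum>d\<in>UNIV. g x $ a $ d * chr g x d c b)"
    by (simp add: mult.commute)
  show ?thesis unfolding 1 2 g_chr[OF assms]
    using pd_g_sym[OF assms, of c a b] pd_g_sym[OF assms, of a b c] pd_g_sym[OF assms, of b a c]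
      pd_g_sym[OF assms, of a c b] pd_g_sym[OF assms, of b c a]
    by (simp add: field_simps)
qed

section \<open>Covariant derivatives\<close>

definition smooth_tensor :: "('n list \<Rightarrow> real^'n \<Rightarrow> real) \<Rightarrow> bool" where
  "smooth_tensor T \<longleftrightarrow> (\<forall>js. smooth (T js))"

lemma smooth_tensorD [simp]: "smooth_tensor T \<Longrightarrow> smooth (T js)" by (simp add: smooth_tensor_def)

lemma covD_Cons: "covD g vs T (c # js) = (\<lambda>x. pd c (T js) x + (\<Sum>p<length vs. \<Sum>d\<in>UNIV.
        (if vs ! p then chr g x (js ! p) c d * T (js[p := d]) x
         else - chr g x d c (js ! p) * T (js[p := d]) x)))"
  by (rule ext) (simp add: covD_def)

lemma covD_Nil: "covD g vs T [] = (\<lambda>x. 0)"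
  by (rule ext) (simp add: covD_def)

lemma smooth_tensor_covD [simp]: "smooth_tensor T \<Longrightarrow> smooth_tensor (covD g vs T)"
  unfolding smooth_tensor_def
proof
  fix js assume T: "\<forall>js. smooth (T js)"
  show "smooth (covD g vs T js)"
  proof (cases js)
    case Nil then show ?thesis by (simp add: covD_Nil)
  next
    case (Cons c js') then show ?thesis using T by (simp add: covD_Cons)
  qed
qed

lemma covD_F: "covD g [False] T [c, a] = (\<lambda>x. pd c (T [a]) x - (\<Sum>d\<in>UNIV. chr g x d c a * T [d] x))"
  by (rule ext) (simp add: covD_def sum_negf)

lemma covD_T: "covD g [True] T [c, a] = (\<lambda>x. pd c (T [a]) x + (\<Sum>d\<in>UNIV. chr g x a c d * T [d] x))"
  by (rule ext) (simp add: covD_def)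

lemma covD_FF: "covD g [False, False] T [c, a, b] = (\<lambda>x. pd c (T [a, b]) x
    - (\<Sum>d\<in>UNIV. chr g x d c a * T [d, b] x) - (\<Sum>d\<in>UNIV. chr g x d c b * T [a, d] x))"
  by (rule ext) (simp add: covD_def sum_negf numeral_2_eq_2 sum.lessThan_Suc_shift)

lemma covD_FT: "covD g [False, True] T [c, a, b] = (\<lambda>x. pd c (T [a, b]) x
    - (\<Sum>d\<in>UNIV. chr g x d c a * T [d, b] x) + (\<Sum>d\<in>UNIV. chr g x b c d * T [a, d] x))"
  by (rule ext) (simp add: covD_def sum_negf numeral_2_eq_2 sum.lessThan_Suc_shift)

lemma covD_FFF: "covD g [False, False, False] T [c, a, b, e] = (\<lambda>x. pd c (T [a, b, e]) x
    - (\<Sum>d\<in>UNIV. chr g x d c a * T [d, b, e] x) - (\<Sum>d\<in>UNIV. chr g x d c b * T [a, d, e] x)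
    - (\<Sum>d\<in>UNIV. chr g x d c e * T [a, b, d] x))"
  by (rule ext) (simp add: covD_def sum_negf eval_nat_numeral sum.lessThan_Suc_shift)

lemma covD_FFFT: "covD g [False, False, False, True] T [c, a, b, e, f] = (\<lambda>x. pd c (T [a, b, e, f]) x
    - (\<Sum>d\<in>UNIV. chr g x d c a * T [d, b, e, f] x) - (\<Sum>d\<in>UNIV. chr g x d c b * T [a, d, e, f] x)
    - (\<Sum>d\<in>UNIV. chr g x d c e * T [a, b, d, f] x) + (\<Sum>d\<in>UNIV. chr g x f c d * T [a, b, e, d] x))"
  by (rule ext) (simp add: covD_def sum_negf eval_nat_numeral sum.lessThan_Suc_shift)

lemma smooth_riem [simp]: "smooth (\<lambda>y. riem g y a b c d)"
  unfolding riem_def by simp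

lemma ricci_identity_1form:
  assumes x: "x \<in> U" and w: "smooth_tensor w"
  shows "covD g [False, False] (covD g [False] w) [a, b, c] x - covD g [False, False] (covD g [False] w) [b, a, c] x
     = (\<Sum>d\<in>UNIV. riem g x a b c d * w [d] x)"
  using x w
  apply (simp add: covD_FF covD_F riem_def pd_commute[of x "w [c]" a b] algebra_simps sum_subtractf sum.distrib sum_distrib_left sum_distrib_right chr_sym[of x])
  apply (subst sum.swap[of "\<lambda>d n. w [d] x * (chr g x d n b * chr g x n a c)"])
  by (subst sum.swap[of "\<lambda>d n. w [d] x * (chr g x d n a * chr g x n b c)"]) (simp add: algebra_simps chr_sym[of x])

lemma g_contract_cancel:
  assumes x: "x \<in> U" and H: "\<And>b. (\<Sum>c\<in>UNIV. P c * g x $ c $ b) = (\<Sum>c\<in>UNIV. Q c * g x $ c $ b)"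
  shows "P a = Q a"
proof -
  have E: "R a = (\<Sum>b\<in>UNIV. (\<Sum>c\<in>UNIV. R c * g x $ c $ b) * ginv g x $ b $ a)" for R
  proof -
    have "(\<Sum>b\<in>UNIV. (\<Sum>c\<in>UNIV. R c * g x $ c $ b) * ginv g x $ b $ a)
        = (\<Sum>c\<in>UNIV. R c * (\<Sum>b\<in>UNIV. g x $ c $ b * ginv g x $ b $ a))"
      by (simp add: sum_distrib_left sum_distrib_right mult.assoc, subst sum.swap, simp add: mult_ac)
    also have "\<dots> = R a" by (simp add: g_ginv[OF x])
    finally show ?thesis by simp
  qed
  show ?thesis using E[of P] E[of Q] H by simp
qed

lemma pd_ginv:
  assumes x: "x \<in> U"
  shows "pd e (\<lambda>y. ginv g y $ a $ c) x = - (\<Sum>d\<in>UNIV. chr g x c e d * ginv g x $ a $ d) - (\<Sum>d\<in>UNIV. chr g x a e d * ginv g x $ d $ c)"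
proof (rule g_contract_cancel[OF x, where P = "\<lambda>c. pd e (\<lambda>y. ginv g y $ a $ c) x"])
  fix b
  have Z0: "pd e (\<lambda>y. \<Sum>k\<in>UNIV. ginv g y $ a $ k * g y $ k $ b) x = pd e (\<lambda>y. if a = b then 1 else 0) x"
    by (rule pd_cong[OF x]) (simp add: ginv_g)
  have Z: "(\<Sum>k\<in>UNIV. pd e (\<lambda>y. ginv g y $ a $ k) x * g x $ k $ b) = - (\<Sum>k\<in>UNIV. ginv g x $ a $ k * pd e (\<lambda>y. g y $ k $ b) x)"
    using Z0 x by (simp add: sum.distrib eq_neg_iff_add_eq_0)
  have "(\<Sum>k\<in>UNIV. ginv g x $ a $ k * pd e (\<lambda>y. g y $ k $ b) x)
     = (\<Sum>k\<in>UNIV. \<Sum>d\<in>UNIV. ginv g x $ a $ k * chr g x d e k * g x $ d $ b)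
       + (\<Sum>d\<in>UNIV. (\<Sum>k\<in>UNIV. ginv g x $ a $ k * g x $ k $ d) * chr g x d e b)"
    by (simp add: pd_g[OF x] sum.distrib distrib_left sum_distrib_left sum_distrib_right mult.assoc, subst (2) sum.swap, simp add: mult_ac)
  also have "\<dots> = (\<Sum>k\<in>UNIV. \<Sum>d\<in>UNIV. ginv g x $ a $ k * chr g x d e k * g x $ d $ b) + chr g x a e b"
    by (simp add: ginv_g[OF x])
  finally have L: "(\<Sum>c\<in>UNIV. pd e (\<lambda>y. ginv g y $ a $ c) x * g x $ c $ b)
     = - (\<Sum>k\<in>UNIV. \<Sum>d\<in>UNIV. ginv g x $ a $ k * chr g x d e k * g x $ d $ b) - chr g x a e b"
    using Z by simp
  have "(\<Sum>c\<in>UNIV. (- (\<Sum>d\<in>UNIV. chr g x c e d * ginv g x $ a $ d) - (\<Sum>d\<in>UNIV. chr g x a e d * ginv g x $ d $ c)) * g x $ c $ b)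
     = - (\<Sum>c\<in>UNIV. \<Sum>d\<in>UNIV. chr g x c e d * ginv g x $ a $ d * g x $ c $ b)
       - (\<Sum>d\<in>UNIV. chr g x a e d * (\<Sum>c\<in>UNIV. ginv g x $ d $ c * g x $ c $ b))"
    by (simp add: sum_subtractf left_diff_distrib sum_distrib_left sum_distrib_right sum_negf mult.assoc, subst sum.swap, simp)
  also have "\<dots> = - (\<Sum>c\<in>UNIV. \<Sum>d\<in>UNIV. chr g x c e d * ginv g x $ a $ d * g x $ c $ b) - chr g x a e b"
    by (simp add: ginv_g[OF x])
  also have "\<dots> = - (\<Sum>k\<in>UNIV. \<Sum>d\<in>UNIV. ginv g x $ a $ k * chr g x d e k * g x $ d $ b) - chr g x a e b"
    by (subst sum.swap) (simp add: chr_sym[OF x] mult_ac)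
  finally show "(\<Sum>c\<in>UNIV. pd e (\<lambda>y. ginv g y $ a $ c) x * g x $ c $ b)
     = (\<Sum>c\<in>UNIV. (- (\<Sum>d\<in>UNIV. chr g x c e d * ginv g x $ a $ d) - (\<Sum>d\<in>UNIV. chr g x a e d * ginv g x $ d $ c)) * g x $ c $ b)"
    using L by simp
qed

definition conn_term :: "bool list \<Rightarrow> 'n list \<Rightarrow> 'n \<Rightarrow> nat \<Rightarrow> 'n \<Rightarrow> real^'n \<Rightarrow> real" where
  "conn_term vs js c p d x = (if vs ! p then chr g x (js ! p) c d else - chr g x d c (js ! p))"

lemma smooth_conn_term [simp]: "smooth (conn_term vs js c p d)"
  unfolding conn_term_def by simp

lemma covD_conn_term: "covD g vs T (c # js) x = pd c (T js) x + (\<Sum>p<length vs. \<Sum>d\<in>UNIV. conn_term vs js c p d x * T (js[p := d]) x)"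
  unfolding covD_def conn_term_def by (auto intro!: sum.cong)

lemma covD_add:
  assumes "x \<in> U" "smooth_tensor A" "smooth_tensor B"
  shows "covD g vs (\<lambda>js y. A js y + B js y) idx x = covD g vs A idx x + covD g vs B idx x"
proof (cases idx)
  case Nil then show ?thesis by (simp add: covD_def)
next
  case (Cons c js) then show ?thesis using assms
    by (simp add: covD_conn_term distrib_left sum.distrib)
qed

lemma covD_diff:
  assumes "x \<in> U" "smooth_tensor A" "smooth_tensor B"
  shows "covD g vs (\<lambda>js y. A js y - B js y) idx x = covD g vs A idx x - covD g vs B idx x"
proof (cases idx)
  case Nil then show ?thesis by (simp add: covD_def)
next
  case (Cons c js) then show ?thesis using assms
    by (simp add: covD_conn_term right_diff_distrib sum_subtractf)
qed

lemma covD_cmult: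
  assumes "x \<in> U" "smooth_tensor A"
  shows "covD g vs (\<lambda>js y. k * A js y) idx x = k * covD g vs A idx x"
proof (cases idx)
  case Nil then show ?thesis by (simp add: covD_def)
next
  case (Cons c js) then show ?thesis using assms
    by (simp add: covD_conn_term distrib_left sum_distrib_left mult_ac)
qed

lemma covD_minus:
  assumes "x \<in> U" "smooth_tensor A"
  shows "covD g vs (\<lambda>js y. - A js y) idx x = - covD g vs A idx x"
  using covD_cmult[OF assms, of vs "-1" idx] by simp

lemma covD_cong:
  assumes x: "x \<in> U" and E: "\<And>js' y. length js' = length js \<Longrightarrow> y \<in> U \<Longrightarrow> A js' y = B js' y"
  shows "covD g vs A (c # js) x = covD g vs B (c # js) x"
proof -
  have "pd c (A js) x = pd c (B js) x" by (rule pd_cong[OF x]) (simp add: E)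
  moreover have "A (js[p := d]) x = B (js[p := d]) x" for p d using E x by simp
  ultimately show ?thesis by (simp add: covD_conn_term)
qed

lemma ricci_identity_2tensor:
  assumes x: "x \<in> U" and w: "smooth_tensor w"
  shows "covD g [False, False, False] (covD g [False, False] w) [a, b, c, e] x
      - covD g [False, False, False] (covD g [False, False] w) [b, a, c, e] x
     = (\<Sum>d\<in>UNIV. riem g x a b c d * w [d, e] x) + (\<Sum>d\<in>UNIV. riem g x a b e d * w [c, d] x)"
  using x w
  apply (simp add: covD_FFF covD_FF riem_def pd_commute[of x "w [c, e]" a b] algebra_simps sum_subtractf sum.distrib sum_distrib_left sum_distrib_right chr_sym[of x])
  apply (subst sum.swap[of "\<lambda>d n. chr g x d n b * (chr g x n a c * w [d, e] x)"])
  apply (subst sum.swap[of "\<lambda>d n. chr g x d n b * (chr g x n a e * w [c, d] x)"])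
  apply (subst sum.swap[of "\<lambda>d n. chr g x d b c * (chr g x n a e * w [d, n] x)"])
  apply (subst sum.swap[of "\<lambda>d n. chr g x d b c * (chr g x n d a * w [n, e] x)"])
  apply (subst sum.swap[of "\<lambda>d n. chr g x d b e * (chr g x n a c * w [n, d] x)"])
  by (subst sum.swap[of "\<lambda>d n. chr g x d b e * (chr g x n d a * w [c, n] x)"]) (simp add: algebra_simps chr_sym[of x])

section \<open>Curvature tensors and their symmetries\<close>

text \<open>Index-list forms of \<open>g\<close>, \<open>Riem\<close>, \<open>Ric\<close> and of the lowered vector field \<open>W\<^sup>\<flat>\<close>,
  the representation of tensor fields on which \<^const>\<open>covD\<close> acts.\<close>
definition g_tensor :: "'n list \<Rightarrow> real^'n \<Rightarrow> real" where
  "g_tensor js y = g y $ (js ! 0) $ (js ! 1)"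
definition riem_tensor :: "'n list \<Rightarrow> real^'n \<Rightarrow> real" where
  "riem_tensor js y = riem g y (js ! 0) (js ! 1) (js ! 2) (js ! 3)"
definition ric_tensor :: "'n list \<Rightarrow> real^'n \<Rightarrow> real" where
  "ric_tensor js y = ric g (js ! 0) (js ! 1) y"
definition flat :: "(real^'n \<Rightarrow> real^'n) \<Rightarrow> 'n list \<Rightarrow> real^'n \<Rightarrow> real" where
  "flat W js y = (\<Sum>a\<in>UNIV. g y $ (js ! 0) $ a * W y $ a)"

lemma g_tensor_fun: "g_tensor js = (\<lambda>y. g y $ (js ! 0) $ (js ! 1))" by (rule ext) (simp add: g_tensor_def)
lemma riem_tensor_fun: "riem_tensor js = (\<lambda>y. riem g y (js ! 0) (js ! 1) (js ! 2) (js ! 3))" by (rule ext) (simp add: riem_tensor_def)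
lemma ric_tensor_fun: "ric_tensor js = ric g (js ! 0) (js ! 1)" by (rule ext) (simp add: ric_tensor_def)
lemma flat_fun: "flat W js = (\<lambda>y. \<Sum>a\<in>UNIV. g y $ (js ! 0) $ a * W y $ a)" by (rule ext) (simp add: flat_def)
lemma vt_fun: "vt W js = (\<lambda>y. W y $ (js ! 0))" by (rule ext) (simp add: vt_def)

lemma smooth_ric [simp]: "smooth (ric g a b)"
proof -
  have "smooth (\<lambda>y. \<Sum>c\<in>UNIV. riem g y a c b c)" by simp
  moreover have "(\<lambda>y. \<Sum>c\<in>UNIV. riem g y a c b c) = ric g a b" by (rule ext) (simp add: ric_def)
  ultimately show ?thesis by simp
qed

lemma smooth_g_tensor [simp]: "smooth_tensor g_tensor" unfolding smooth_tensor_def g_tensor_def by simp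
lemma smooth_riem_tensor [simp]: "smooth_tensor riem_tensor" unfolding smooth_tensor_def riem_tensor_def by simp
lemma smooth_ric_tensor [simp]: "smooth_tensor ric_tensor" unfolding smooth_tensor_def ric_tensor_def by simp
lemma smooth_flat [simp]: "(\<And>i. smooth (\<lambda>y. W y $ i)) \<Longrightarrow> smooth_tensor (flat W)" unfolding smooth_tensor_def flat_def by simp
lemma smooth_vt [simp]: "(\<And>i. smooth (\<lambda>y. W y $ i)) \<Longrightarrow> smooth_tensor (vt W)" unfolding smooth_tensor_def vt_def by simp

lemma covD_zero: "covD g vs (\<lambda>js y. 0) idx x = 0"
proof (cases idx)
  case Nil then show ?thesis by (simp add: covD_def)
next
  case (Cons c js) then show ?thesis by (simp only: covD_conn_term) simp
qed

lemma covD_g_tensor: "x \<in> U \<Longrightarrow> covD g [False, False] g_tensor [c, a, b] x = 0"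
  by (simp add: covD_FF g_tensor_fun pd_g)

lemma covD_covD_g_tensor: assumes x: "x \<in> U"
  shows "covD g [False, False, False] (covD g [False, False] g_tensor) [a, b, c, e] x = 0"
proof -
  have "covD g [False, False, False] (covD g [False, False] g_tensor) [a, b, c, e] x = covD g [False, False, False] (\<lambda>js y. 0) [a, b, c, e] x"
  proof (rule covD_cong[OF x])
    fix js' :: "'n list" and y assume "length js' = length [b, c, e]" "y \<in> U"
    then obtain p q r where "js' = [p, q, r]" using length_eq_3D by force
    then show "covD g [False, False] g_tensor js' y = 0" using covD_g_tensor \<open>y \<in> U\<close> by simp
  qed
  then show ?thesis by (simp add: covD_zero)
qed

lemma riem_antisym: "riem g x a b c d = - riem g x b a c d"
  by (simp add: riem_def algebra_simps sum_subtractf)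

lemma riem_g_antisym: assumes x: "x \<in> U"
  shows "(\<Sum>d\<in>UNIV. riem g x a b c d * g x $ d $ e) = - (\<Sum>d\<in>UNIV. riem g x a b e d * g x $ d $ c)"
proof -
  have "0 = (\<Sum>d\<in>UNIV. riem g x a b c d * g_tensor [d, e] x) + (\<Sum>d\<in>UNIV. riem g x a b e d * g_tensor [c, d] x)"
    using ricci_identity_2tensor[OF x smooth_g_tensor, of a b c e] covD_covD_g_tensor[OF x] by simp
  moreover have "(\<Sum>d\<in>UNIV. riem g x a b e d * g_tensor [c, d] x) = (\<Sum>d\<in>UNIV. riem g x a b e d * g x $ d $ c)"
    using g_sym[OF x] by (simp add: g_tensor_def)
  ultimately show ?thesis by (simp add: g_tensor_def eq_neg_iff_add_eq_0)
qed

lemma riem_bianchi1: assumes x: "x \<in> U"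
  shows "riem g x a b c d + riem g x b c a d + riem g x c a b d = 0"
  using x by (simp add: riem_def algebra_simps sum_subtractf pd_chr_sym[of x] chr_sym[of x])

definition riem_low :: "real^'n \<Rightarrow> 'n \<Rightarrow> 'n \<Rightarrow> 'n \<Rightarrow> 'n \<Rightarrow> real" where
  "riem_low x a b c d = (\<Sum>f\<in>UNIV. riem g x a b c f * g x $ f $ d)"

lemma riem_low_antisym12: "riem_low x a b c d = - riem_low x b a c d"
  unfolding riem_low_def by (subst riem_antisym) (simp add: sum_negf)

lemma riem_low_antisym34: "x \<in> U \<Longrightarrow> riem_low x a b c d = - riem_low x a b d c"
  unfolding riem_low_def by (rule riem_g_antisym)

lemma riem_low_bianchi1: assumes x: "x \<in> U" shows "riem_low x a b c d + riem_low x b c a d + riem_low x c a b d = 0"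
proof -
  have "riem_low x a b c d + riem_low x b c a d + riem_low x c a b d = (\<Sum>f\<in>UNIV. (riem g x a b c f + riem g x b c a f + riem g x c a b f) * g x $ f $ d)"
    unfolding riem_low_def by (simp add: sum.distrib distrib_right)
  also have "\<dots> = 0" using riem_bianchi1[OF x] by simp
  finally show ?thesis .
qed

lemma riem_low_pair_sym: assumes x: "x \<in> U" shows "riem_low x a b c d = riem_low x c d a b"
proof -
  have trace_riem_flat: "\<And>a b c d. riem_low x a b c d = - riem_low x b a c d" by (rule riem_low_antisym12)
  have ginv_riem_trace: "\<And>a b c d. riem_low x a b c d = - riem_low x a b d c" by (rule riem_low_antisym34[OF x])
  have B: "\<And>a b c d. riem_low x a b c d + riem_low x b c a d + riem_low x c a b d = 0" by (rule riem_low_bianchi1[OF x])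
  show ?thesis using trace_riem_flat[of a b c d] ginv_riem_trace[of a b c d] trace_riem_flat[of a b d c] ginv_riem_trace[of a b d c] trace_riem_flat[of a c d b] ginv_riem_trace[of a c d b] trace_riem_flat[of b c a d] ginv_riem_trace[of b c a d] trace_riem_flat[of b c d a] ginv_riem_trace[of b c d a] trace_riem_flat[of b d a c] ginv_riem_trace[of b d a c] trace_riem_flat[of c a b d] ginv_riem_trace[of c a b d] trace_riem_flat[of c d a b] ginv_riem_trace[of c d a b] trace_riem_flat[of c d b a] ginv_riem_trace[of c d b a] trace_riem_flat[of d a b c] ginv_riem_trace[of d a b c] trace_riem_flat[of d a c b] ginv_riem_trace[of d a c b] trace_riem_flat[of d b c a] ginv_riem_trace[of d b c a] B[of a b c d] B[of b c d a] B[of c d a b] B[of d a b c] by linarith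
qed

lemma riem_eq_riem_low_ginv: assumes x: "x \<in> U" shows "riem g x a b c d = (\<Sum>k\<in>UNIV. riem_low x a b c k * ginv g x $ k $ d)"
proof -
  have "(\<Sum>k\<in>UNIV. riem_low x a b c k * ginv g x $ k $ d) = (\<Sum>f\<in>UNIV. riem g x a b c f * (\<Sum>k\<in>UNIV. g x $ f $ k * ginv g x $ k $ d))"
    unfolding riem_low_def
    by (simp add: sum_distrib_left sum_distrib_right mult.assoc, subst sum.swap, simp)
  also have "\<dots> = riem g x a b c d" by (simp add: g_ginv[OF x])
  finally show ?thesis by simp
qed

lemma ric_eq_riem_low: assumes x: "x \<in> U" shows "ric g a b x = (\<Sum>c\<in>UNIV. \<Sum>k\<in>UNIV. riem_low x a c b k * ginv g x $ k $ c)"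
  unfolding ric_def using riem_eq_riem_low_ginv[OF x] by simp

lemma ric_sym: assumes x: "x \<in> U" shows "ric g a b x = ric g b a x"
proof -
  have "ric g b a x = (\<Sum>c\<in>UNIV. \<Sum>k\<in>UNIV. riem_low x a k b c * ginv g x $ k $ c)"
    unfolding ric_eq_riem_low[OF x] using riem_low_pair_sym[OF x] by simp
  also have "\<dots> = (\<Sum>k\<in>UNIV. \<Sum>c\<in>UNIV. riem_low x a k b c * ginv g x $ c $ k)"
    using ginv_sym[OF x] by (subst sum.swap) simp
  also have "\<dots> = ric g a b x" unfolding ric_eq_riem_low[OF x] by simp
  finally show ?thesis by simp
qed

lemma covD_FF_swap: "covD g [False, False] (\<lambda>js. T [js ! 1, js ! 0]) [c, a, b] x = covD g [False, False] T [c, b, a] x"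
  by (simp add: covD_FF)

lemma covD_FFF_swap01: "covD g [False, False, False] (\<lambda>js. T [js ! 1, js ! 0, js ! 2]) [c, a, b, e] x = covD g [False, False, False] T [c, b, a, e] x"
  by (simp add: covD_FFF algebra_simps)

lemma covD_FFF_swap12: "covD g [False, False, False] (\<lambda>js. T [js ! 0, js ! 2, js ! 1]) [c, a, b, e] x = covD g [False, False, False] T [c, a, e, b] x"
  by (simp add: covD_FFF algebra_simps)

lemma covD_FFFT_swap01: "covD g [False, False, False, True] (\<lambda>js. T [js ! 1, js ! 0, js ! 2, js ! 3]) [c, a, b, e, f] x
    = covD g [False, False, False, True] T [c, b, a, e, f] x"
  by (simp add: covD_FFFT algebra_simps)

lemma t2_fun: "t2 u js = u (js ! 0) (js ! 1)" by (rule ext) (simp add: t2_def)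

lemma lie2_eq_covD:
  assumes x: "x \<in> U" and W: "\<And>i. smooth (\<lambda>y. W y $ i)" and u: "\<And>a b. smooth (u a b)"
  shows "lie2 W u a b x = (\<Sum>c\<in>UNIV. W x $ c * covD g [False, False] (t2 u) [c, a, b] x)
     + (\<Sum>c\<in>UNIV. u c b x * covD g [True] (vt W) [a, c] x) + (\<Sum>c\<in>UNIV. u a c x * covD g [True] (vt W) [b, c] x)"
  using x W u
  apply (simp add: lie2_def covD_FF covD_T t2_fun vt_fun algebra_simps sum.distrib sum_subtractf sum_distrib_left chr_sym[of x])
  apply (subst sum.swap[of "\<lambda>c n. W x $ n * (u a c x * chr g x c n b)"])
  by (subst sum.swap[of "\<lambda>c n. W x $ n * (u c b x * chr g x c n a)"]) (simp add: algebra_simps chr_sym[of x])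

lemma covD_flat:
  assumes x: "x \<in> U" and W: "\<And>i. smooth (\<lambda>y. W y $ i)"
  shows "covD g [False] (flat W) [c, b] x = (\<Sum>a\<in>UNIV. g x $ b $ a * covD g [True] (vt W) [c, a] x)"
  using x W
  apply (simp add: covD_F covD_T flat_fun vt_fun pd_g algebra_simps sum.distrib sum_subtractf sum_distrib_left sum_distrib_right chr_sym[of x])
  apply (subst sum.swap[of "\<lambda>a n. W x $ n * (chr g x a n c * g x $ b $ a)"])
  by (subst sum.swap[of "\<lambda>d n. W x $ n * (chr g x d b c * g x $ d $ n)"]) (simp add: algebra_simps chr_sym[of x])

lemma covD_FF_lower:
  assumes x: "x \<in> U" and T: "smooth_tensor T"
  shows "covD g [False, False] (\<lambda>js y. \<Sum>a\<in>UNIV. g y $ (js ! 1) $ a * T [js ! 0, a] y) [d, c, b] x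
     = (\<Sum>a\<in>UNIV. g x $ b $ a * covD g [False, True] T [d, c, a] x)"
  using x T
  apply (simp add: covD_FF covD_FT pd_g algebra_simps sum.distrib sum_subtractf sum_distrib_left sum_distrib_right chr_sym[of x])
  apply (subst sum.swap[of "\<lambda>a n. chr g x a n d * (g x $ b $ a * T [c, n] x)"])
  apply (subst sum.swap[of "\<lambda>da n. chr g x da b d * (g x $ da $ n * T [c, n] x)"])
  by (subst sum.swap[of "\<lambda>da n. chr g x da c d * (g x $ b $ n * T [da, n] x)"]) (simp add: algebra_simps chr_sym[of x])

lemma covD_scaled_g:
  assumes x: "x \<in> U" and f: "smooth f"
  shows "covD g [False, False] (\<lambda>js y. f y * g y $ (js ! 0) $ (js ! 1)) [c, a, b] x = pd c f x * g x $ a $ b"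
  using x f by (simp add: covD_FF pd_g algebra_simps sum.distrib sum_subtractf sum_distrib_left sum_distrib_right)

lemma pd_ginv_trace:
  assumes x: "x \<in> U" and T: "smooth_tensor T"
  shows "pd e (\<lambda>y. \<Sum>a\<in>UNIV. \<Sum>c\<in>UNIV. ginv g y $ a $ c * T [c, a] y) x
     = (\<Sum>a\<in>UNIV. \<Sum>c\<in>UNIV. ginv g x $ a $ c * covD g [False, False] T [e, c, a] x)"
  using x T
  apply (simp add: covD_FF pd_ginv algebra_simps sum.distrib sum_subtractf sum_distrib_left sum_distrib_right chr_sym[of x])
  apply (subst sum3_132[of "\<lambda>a c n. chr g x c n e * (ginv g x $ a $ n * T [c, a] x)"])
  by (subst sum3_321[of "\<lambda>a c n. chr g x a n e * (ginv g x $ n $ c * T [c, a] x)"]) (simp add: algebra_simps chr_sym[of x])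

lemma covD_ginv_trace:
  assumes x: "x \<in> U" and T: "smooth_tensor T"
  shows "covD g [False] (\<lambda>js y. \<Sum>c\<in>UNIV. \<Sum>d\<in>UNIV. ginv g y $ c $ d * T [c, d, js ! 0] y) [a, b] x
     = (\<Sum>c\<in>UNIV. \<Sum>d\<in>UNIV. ginv g x $ c $ d * covD g [False, False, False] T [a, c, d, b] x)"
  using x T
  apply (simp add: covD_F covD_FFF pd_ginv algebra_simps sum.distrib sum_subtractf sum_distrib_left sum_distrib_right chr_sym[of x])
  apply (subst sum3_231[of "\<lambda>d n na. chr g x d a b * (ginv g x $ n $ na * T [n, na, d] x)"])
  apply (subst sum3_132[of "\<lambda>c d n. chr g x d n a * (ginv g x $ c $ n * T [c, d, b] x)"])
  by (subst sum3_321[of "\<lambda>c d n. chr g x c n a * (ginv g x $ n $ d * T [c, d, b] x)"]) (simp add: algebra_simps chr_sym[of x])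

section \<open>The second Bianchi identity\<close>

lemma ric_fun: "ric g a b = (\<lambda>y. \<Sum>c\<in>UNIV. riem g y a c b c)"
  by (rule ext) (simp add: ric_def)

lemma covD_riem_contract:
  assumes x: "x \<in> U" and w: "smooth_tensor w"
  shows "covD g [False, False, False] (\<lambda>js y. \<Sum>e\<in>UNIV. riem g y (js ! 0) (js ! 1) (js ! 2) e * w [e] y) [c, d, a, b] x
    = (\<Sum>e\<in>UNIV. covD g [False, False, False, True] riem_tensor [c, d, a, b, e] x * w [e] x)
      + (\<Sum>e\<in>UNIV. riem g x d a b e * covD g [False] w [c, e] x)"
  using x w
  apply (simp add: covD_FFF covD_FFFT covD_F riem_tensor_fun algebra_simps sum.distrib sum_subtractf sum_distrib_left sum_distrib_right chr_sym[of x])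
  apply (subst sum.swap[of "\<lambda>da n. w [n] x * (chr g x da a c * riem g x d da b n)"])
  apply (subst sum.swap[of "\<lambda>da n. w [n] x * (chr g x da b c * riem g x d a da n)"])
  apply (subst sum.swap[of "\<lambda>da n. w [n] x * (chr g x da c d * riem g x da a b n)"])
  by (subst sum.swap[of "\<lambda>e n. w [e] x * (chr g x e n c * riem g x d a b n)"]) (simp add: algebra_simps chr_sym[of x])

lemma covD_ric_contract:
  assumes x: "x \<in> U" and W: "\<And>i. smooth (\<lambda>y. W y $ i)"
  shows "covD g [False] (\<lambda>js y. \<Sum>d\<in>UNIV. ric g (js ! 0) d y * W y $ d) [a, b] x
    = (\<Sum>d\<in>UNIV. covD g [False, False] ric_tensor [a, b, d] x * W x $ d)
      + (\<Sum>d\<in>UNIV. ric g b d x * covD g [True] (vt W) [a, d] x)"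
  using x W
  apply (simp add: covD_F covD_FF covD_T ric_tensor_fun vt_fun algebra_simps sum.distrib sum_subtractf sum_distrib_left sum_distrib_right chr_sym[of x])
  apply (subst sum.swap[of "\<lambda>d n. W x $ n * (ric g b d x * chr g x d n a)"])
  by (subst sum.swap[of "\<lambda>d n. W x $ n * (ric g d n x * chr g x d a b)"]) (simp add: algebra_simps chr_sym[of x])

lemma covD_g_riem_contract:
  assumes x: "x \<in> U" and W: "\<And>i. smooth (\<lambda>y. W y $ i)"
  shows "covD g [False, False, False] (\<lambda>js y. \<Sum>e\<in>UNIV. \<Sum>k\<in>UNIV. g y $ (js ! 0) $ k * riem g y (js ! 2) e (js ! 1) k * W y $ e) [c, d, a, b] x
    = (\<Sum>e\<in>UNIV. \<Sum>k\<in>UNIV. g x $ d $ k * (covD g [False, False, False, True] riem_tensor [c, b, e, a, k] x * W x $ e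
         + riem g x b e a k * covD g [True] (vt W) [c, e] x))"
  using x W
  apply (simp add: covD_FFF covD_FFFT covD_T riem_tensor_fun vt_fun pd_g algebra_simps sum.distrib sum_subtractf sum_distrib_left sum_distrib_right chr_sym[of x])
  apply (subst sum3_231[of "\<lambda>da n na. W x $ n * (chr g x da a c * (g x $ d $ na * riem g x b n da na))"])
  apply (subst sum3_231[of "\<lambda>da n na. W x $ n * (chr g x da b c * (g x $ d $ na * riem g x da n a na))"])
  apply (subst sum3_231[of "\<lambda>da n na. W x $ n * (chr g x da c d * (g x $ da $ na * riem g x b n a na))"])
  apply (subst sum3_132[of "\<lambda>e k n. W x $ e * (chr g x k n c * (g x $ d $ k * riem g x b e a n))"])
  by (subst sum3_321[of "\<lambda>e k n. W x $ n * (chr g x e n c * (g x $ d $ k * riem g x b e a k))"]) (simp add: algebra_simps chr_sym[of x])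

lemma covD_ric_tensor_trace:
  assumes x: "x \<in> U"
  shows "covD g [False, False] ric_tensor [c, a, b] x = (\<Sum>d\<in>UNIV. covD g [False, False, False, True] riem_tensor [c, a, d, b, d] x)"
  using x
  apply (simp add: covD_FF covD_FFFT ric_tensor_fun riem_tensor_fun ric_fun algebra_simps sum.distrib sum_subtractf sum_distrib_left sum_distrib_right chr_sym[of x])
  apply (subst sum.swap[of "\<lambda>d n. chr g x d a c * riem g x d n b n"])
  apply (subst sum.swap[of "\<lambda>d n. chr g x d b c * riem g x a n d n"])
  by (subst sum.swap[of "\<lambda>d da. chr g x d da c * riem g x a d b da"]) (simp add: algebra_simps chr_sym[of x])

lemma covD_ricci_identity_1form:
  assumes x: "x \<in> U" and w: "smooth_tensor w"
  shows "covD g [False, False, False] (covD g [False, False] (covD g [False] w)) [e, a, b, c] x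
     - covD g [False, False, False] (covD g [False, False] (covD g [False] w)) [e, b, a, c] x
     = (\<Sum>d\<in>UNIV. covD g [False, False, False, True] riem_tensor [e, a, b, c, d] x * w [d] x)
       + (\<Sum>d\<in>UNIV. riem g x a b c d * covD g [False] w [e, d] x)"
proof -
  let ?N2 = "covD g [False, False] (covD g [False] w)"
  have N2s: "smooth_tensor ?N2" using w by simp
  have sA: "smooth_tensor (\<lambda>js. ?N2 [js ! 1, js ! 0, js ! 2])" unfolding smooth_tensor_def using N2s by simp
  have sB: "smooth_tensor (\<lambda>js y. \<Sum>d\<in>UNIV. riem g y (js ! 0) (js ! 1) (js ! 2) d * w [d] y)" unfolding smooth_tensor_def using w by simp
  have "covD g [False, False, False] ?N2 [e, a, b, c] x
      = covD g [False, False, False] (\<lambda>js y. ?N2 [js ! 1, js ! 0, js ! 2] y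
          + (\<Sum>d\<in>UNIV. riem g y (js ! 0) (js ! 1) (js ! 2) d * w [d] y)) [e, a, b, c] x"
  proof (rule covD_cong[OF x])
    fix js' :: "'n list" and y assume "length js' = length [a, b, c]" and y: "y \<in> U"
    then obtain p q r where js': "js' = [p, q, r]" using length_eq_3D by force
    show "?N2 js' y = ?N2 [js' ! 1, js' ! 0, js' ! 2] y + (\<Sum>d\<in>UNIV. riem g y (js' ! 0) (js' ! 1) (js' ! 2) d * w [d] y)"
      using ricci_identity_1form[OF y w, of p q r] unfolding js' by simp
  qed
  also have "\<dots> = covD g [False, False, False] (\<lambda>js. ?N2 [js ! 1, js ! 0, js ! 2]) [e, a, b, c] x
      + covD g [False, False, False] (\<lambda>js y. \<Sum>d\<in>UNIV. riem g y (js ! 0) (js ! 1) (js ! 2) d * w [d] y) [e, a, b, c] x"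
    using covD_add[OF x sA sB] by simp
  also have "\<dots> = covD g [False, False, False] ?N2 [e, b, a, c] x
      + ((\<Sum>d\<in>UNIV. covD g [False, False, False, True] riem_tensor [e, a, b, c, d] x * w [d] x)
       + (\<Sum>d\<in>UNIV. riem g x a b c d * covD g [False] w [e, d] x))"
    by (simp only: covD_FFF_swap01 covD_riem_contract[OF x w])
  finally show ?thesis by simp
qed

text \<open>The antisymmetrised third derivative \<open>\<nabla>\<^sub>e(\<nabla>\<^sub>a\<nabla>\<^sub>b - \<nabla>\<^sub>b\<nabla>\<^sub>a)w\<^sub>c\<close>, summed cyclically over
  \<open>e, a, b\<close>, can be evaluated by either Ricci identity; by the first Bianchi identity the two results
  differ exactly by the cyclic sum of \<open>\<nabla>Riem\<close> applied to \<open>w\<close>.\<close>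
lemma bianchi2_contract:
  assumes x: "x \<in> U" and w: "smooth_tensor w"
  shows "(\<Sum>d\<in>UNIV. (covD g [False, False, False, True] riem_tensor [e, a, b, c, d] x
        + covD g [False, False, False, True] riem_tensor [a, b, e, c, d] x
        + covD g [False, False, False, True] riem_tensor [b, e, a, c, d] x) * w [d] x) = 0"
proof -
  let ?N1 = "covD g [False] w"
  have w1: "smooth_tensor ?N1" using w by simp
  note I = ricci_identity_2tensor[OF x w1]
  note J = covD_ricci_identity_1form[OF x w]
  have B1: "riem g x e a b d + riem g x a b e d + riem g x b e a d = 0" for d
    using riem_bianchi1[OF x] by blast
  have S: "(\<Sum>d\<in>UNIV. riem g x e a b d * ?N1 [d, c] x) + (\<Sum>d\<in>UNIV. riem g x a b e d * ?N1 [d, c] x)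
      + (\<Sum>d\<in>UNIV. riem g x b e a d * ?N1 [d, c] x) = 0"
  proof -
    have "(\<Sum>d\<in>UNIV. riem g x e a b d * ?N1 [d, c] x) + (\<Sum>d\<in>UNIV. riem g x a b e d * ?N1 [d, c] x)
      + (\<Sum>d\<in>UNIV. riem g x b e a d * ?N1 [d, c] x)
      = (\<Sum>d\<in>UNIV. (riem g x e a b d + riem g x a b e d + riem g x b e a d) * ?N1 [d, c] x)"
      by (simp add: sum.distrib distrib_right)
    also have "\<dots> = 0" using B1 by simp
    finally show ?thesis .
  qed
  have "(\<Sum>d\<in>UNIV. (covD g [False, False, False, True] riem_tensor [e, a, b, c, d] x
        + covD g [False, False, False, True] riem_tensor [a, b, e, c, d] x
        + covD g [False, False, False, True] riem_tensor [b, e, a, c, d] x) * w [d] x)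
     = (\<Sum>d\<in>UNIV. covD g [False, False, False, True] riem_tensor [e, a, b, c, d] x * w [d] x)
       + (\<Sum>d\<in>UNIV. covD g [False, False, False, True] riem_tensor [a, b, e, c, d] x * w [d] x)
       + (\<Sum>d\<in>UNIV. covD g [False, False, False, True] riem_tensor [b, e, a, c, d] x * w [d] x)"
    by (simp add: sum.distrib distrib_right)
  also have "\<dots> = 0"
    using I[of e a b c] I[of a b e c] I[of b e a c] J[of e a b c] J[of a b e c] J[of b e a c] S
    by linarith
  finally show ?thesis .
qed

lemma riem_bianchi2:
  assumes x: "x \<in> U"
  shows "covD g [False, False, False, True] riem_tensor [e, a, b, c, f] x
        + covD g [False, False, False, True] riem_tensor [a, b, e, c, f] x
        + covD g [False, False, False, True] riem_tensor [b, e, a, c, f] x = 0"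
proof -
  txt \<open>Test against the coordinate 1-form \<open>dx\<^sup>f\<close>.\<close>
  have w: "smooth_tensor (\<lambda>js y. if js ! 0 = f then 1 else 0)" by (simp add: smooth_tensor_def)
  from bianchi2_contract[OF x w, of e a b c] show ?thesis by simp
qed

lemma covD_riem_antisym:
  assumes x: "x \<in> U"
  shows "covD g [False, False, False, True] riem_tensor [c, d, a, b, e] x = - covD g [False, False, False, True] riem_tensor [c, a, d, b, e] x"
proof -
  have sA: "smooth_tensor (\<lambda>js. riem_tensor [js ! 1, js ! 0, js ! 2, js ! 3])" by (simp add: smooth_tensor_def riem_tensor_fun)
  have "covD g [False, False, False, True] riem_tensor [c, d, a, b, e] x
     = covD g [False, False, False, True] (\<lambda>js y. - riem_tensor [js ! 1, js ! 0, js ! 2, js ! 3] y) [c, d, a, b, e] x"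
  proof (rule covD_cong[OF x])
    fix js' :: "'n list" and y assume "length js' = length [d, a, b, e]" "y \<in> U"
    then obtain p q r s where "js' = [p, q, r, s]" using length_eq_4D by force
    then show "riem_tensor js' y = - riem_tensor [js' ! 1, js' ! 0, js' ! 2, js' ! 3] y" by (simp add: riem_tensor_def riem_antisym[of y p q])
  qed
  also have "\<dots> = - covD g [False, False, False, True] (\<lambda>js. riem_tensor [js ! 1, js ! 0, js ! 2, js ! 3]) [c, d, a, b, e] x"
    using covD_minus[OF x sA] by simp
  also have "\<dots> = - covD g [False, False, False, True] riem_tensor [c, a, d, b, e] x"
    by (simp only: covD_FFFT_swap01)
  finally show ?thesis .
qed

lemma bianchi2_contracted:
  assumes x: "x \<in> U"
  shows "(\<Sum>d\<in>UNIV. covD g [False, False, False, True] riem_tensor [d, a, c, b, d] x)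
     = covD g [False, False] ric_tensor [c, a, b] x - covD g [False, False] ric_tensor [a, c, b] x"
proof -
  have "(\<Sum>d\<in>UNIV. covD g [False, False, False, True] riem_tensor [d, a, c, b, d] x
      + covD g [False, False, False, True] riem_tensor [a, c, d, b, d] x
      + covD g [False, False, False, True] riem_tensor [c, d, a, b, d] x) = 0"
    using riem_bianchi2[OF x] by simp
  moreover have "(\<Sum>d\<in>UNIV. covD g [False, False, False, True] riem_tensor [c, d, a, b, d] x)
     = - covD g [False, False] ric_tensor [c, a, b] x"
  proof -
    have "(\<Sum>d\<in>UNIV. covD g [False, False, False, True] riem_tensor [c, d, a, b, d] x)
        = (\<Sum>d\<in>UNIV. - covD g [False, False, False, True] riem_tensor [c, a, d, b, d] x)"
      by (rule sum.cong[OF refl]) (rule covD_riem_antisym[OF x])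
    also have "\<dots> = - covD g [False, False] ric_tensor [c, a, b] x" by (simp only: sum_negf covD_ric_tensor_trace[OF x])
    finally show ?thesis .
  qed
  moreover have "(\<Sum>d\<in>UNIV. covD g [False, False, False, True] riem_tensor [a, c, d, b, d] x) = covD g [False, False] ric_tensor [a, c, b] x"
    by (simp only: covD_ric_tensor_trace[OF x])
  ultimately show ?thesis by (simp only: sum.distrib)
qed

lemma covD_ric_sym:
  assumes x: "x \<in> U"
  shows "covD g [False, False] ric_tensor [c, a, b] x = covD g [False, False] ric_tensor [c, b, a] x"
proof -
  have "covD g [False, False] ric_tensor [c, a, b] x = covD g [False, False] (\<lambda>js. ric_tensor [js ! 1, js ! 0]) [c, a, b] x"
  proof (rule covD_cong[OF x])
    fix js' :: "'n list" and y assume "length js' = length [a, b]" "y \<in> U"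
    then obtain p q where "js' = [p, q]" using length_eq_2D by force
    then show "ric_tensor js' y = ric_tensor [js' ! 1, js' ! 0] y" using \<open>y \<in> U\<close> by (simp add: ric_tensor_def ric_sym)
  qed
  also have "\<dots> = covD g [False, False] ric_tensor [c, b, a] x" by (rule covD_FF_swap)
  finally show ?thesis .
qed

section \<open>The first identity\<close>

lemma t2_gt: "t2 (gt g) = g_tensor"
  by (rule ext)+ (simp add: t2_def gt_def g_tensor_def)

lemma smooth_gt [simp]: "smooth (gt g a b)"
proof -
  have "gt g a b = (\<lambda>y. g y $ a $ b)" by (rule ext) (simp add: gt_def)
  then show ?thesis by simp
qed

lemma lie2_g_eq_flat:
  assumes x: "x \<in> U" and W: "\<And>i. smooth (\<lambda>y. W y $ i)"
  shows "lie2 W (gt g) a b x = covD g [False] (flat W) [a, b] x + covD g [False] (flat W) [b, a] x"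
proof -
  have "lie2 W (gt g) a b x = (\<Sum>c\<in>UNIV. gt g c b x * covD g [True] (vt W) [a, c] x) + (\<Sum>c\<in>UNIV. gt g a c x * covD g [True] (vt W) [b, c] x)"
    using lie2_eq_covD[OF x W, of "gt g" a b] covD_g_tensor[OF x] by (simp add: t2_gt)
  also have "\<dots> = covD g [False] (flat W) [a, b] x + covD g [False] (flat W) [b, a] x"
    using covD_flat[OF x W] g_sym[OF x] by (simp add: gt_def)
  finally show ?thesis .
qed

lemma covD2_flat:
  assumes x: "x \<in> U" and W: "\<And>i. smooth (\<lambda>y. W y $ i)"
  shows "covD g [False, False] (covD g [False] (flat W)) [d, c, b] x
     = (\<Sum>a\<in>UNIV. g x $ b $ a * covD g [False, True] (covD g [True] (vt W)) [d, c, a] x)"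
proof -
  have "covD g [False, False] (covD g [False] (flat W)) [d, c, b] x
     = covD g [False, False] (\<lambda>js y. \<Sum>a\<in>UNIV. g y $ (js ! 1) $ a * covD g [True] (vt W) [js ! 0, a] y) [d, c, b] x"
  proof (rule covD_cong[OF x])
    fix js' :: "'n list" and y assume "length js' = length [c, b]" and y: "y \<in> U"
    then obtain p q where js': "js' = [p, q]" using length_eq_2D by force
    show "covD g [False] (flat W) js' y = (\<Sum>a\<in>UNIV. g y $ (js' ! 1) $ a * covD g [True] (vt W) [js' ! 0, a] y)"
      using covD_flat[OF y W, of p q] unfolding js' by simp
  qed
  also have "\<dots> = (\<Sum>a\<in>UNIV. g x $ b $ a * covD g [False, True] (covD g [True] (vt W)) [d, c, a] x)"
    using covD_FF_lower[OF x] W by simp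
  finally show ?thesis .
qed

lemma covD2_vt_eq_ginv:
  assumes x: "x \<in> U" and W: "\<And>i. smooth (\<lambda>y. W y $ i)"
  shows "covD g [False, True] (covD g [True] (vt W)) [d, c, a] x
     = (\<Sum>e\<in>UNIV. ginv g x $ a $ e * covD g [False, False] (covD g [False] (flat W)) [d, c, e] x)"
proof -
  have "(\<Sum>e\<in>UNIV. ginv g x $ a $ e * covD g [False, False] (covD g [False] (flat W)) [d, c, e] x)
     = (\<Sum>e\<in>UNIV. \<Sum>b\<in>UNIV. ginv g x $ a $ e * g x $ e $ b * covD g [False, True] (covD g [True] (vt W)) [d, c, b] x)"
    by (simp add: covD2_flat[OF x W] sum_distrib_left mult.assoc)
  also have "\<dots> = (\<Sum>b\<in>UNIV. (\<Sum>e\<in>UNIV. ginv g x $ a $ e * g x $ e $ b) * covD g [False, True] (covD g [True] (vt W)) [d, c, b] x)"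
    by (subst sum.swap) (simp add: sum_distrib_right)
  also have "\<dots> = covD g [False, True] (covD g [True] (vt W)) [d, c, a] x"
    by (simp add: ginv_g[OF x])
  finally show ?thesis by simp
qed

lemma divV_eq_trace_flat:
  assumes x: "x \<in> U" and W: "\<And>i. smooth (\<lambda>y. W y $ i)"
  shows "divV g W x = (\<Sum>a\<in>UNIV. \<Sum>c\<in>UNIV. ginv g x $ a $ c * covD g [False] (flat W) [c, a] x)"
proof -
  have "(\<Sum>a\<in>UNIV. \<Sum>c\<in>UNIV. ginv g x $ a $ c * covD g [False] (flat W) [c, a] x)
      = (\<Sum>a\<in>UNIV. \<Sum>c\<in>UNIV. \<Sum>e\<in>UNIV. ginv g x $ a $ c * g x $ a $ e * covD g [True] (vt W) [c, e] x)"
    by (simp add: covD_flat[OF x W] sum_distrib_left mult.assoc)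
  also have "\<dots> = (\<Sum>c\<in>UNIV. \<Sum>e\<in>UNIV. (\<Sum>a\<in>UNIV. ginv g x $ c $ a * g x $ a $ e) * covD g [True] (vt W) [c, e] x)"
    apply (subst sum3_231)
    apply (simp add: sum_distrib_right mult.assoc)
    apply (simp add: ginv_sym[OF x])
    done
  also have "\<dots> = divV g W x"
    by (simp add: ginv_g[OF x] divV_def)
  finally show ?thesis by simp
qed

lemma divV_fun: "divV g W = (\<lambda>y. \<Sum>a\<in>UNIV. covD g [True] (vt W) [a, a] y)"
  by (rule ext) (simp add: divV_def)

lemma smooth_divV [simp]: "(\<And>i. smooth (\<lambda>y. W y $ i)) \<Longrightarrow> smooth (divV g W)"
  unfolding divV_fun by simp

lemma trace_riem_flat:
  assumes x: "x \<in> U"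
  shows "(\<Sum>a\<in>UNIV. \<Sum>c\<in>UNIV. ginv g x $ a $ c * (\<Sum>d\<in>UNIV. riem g x c e a d * flat V [d] x))
     = (\<Sum>b\<in>UNIV. ric g e b x * V x $ b)"
proof -
  have 1: "(\<Sum>d\<in>UNIV. riem g x c e a d * flat V [d] x) = (\<Sum>b\<in>UNIV. riem_low x e c b a * V x $ b)" for c a
  proof -
    have "(\<Sum>d\<in>UNIV. riem g x c e a d * flat V [d] x) = (\<Sum>b\<in>UNIV. riem_low x c e a b * V x $ b)"
      unfolding flat_def riem_low_def
      by (simp add: sum_distrib_left sum_distrib_right mult.assoc, subst sum.swap, simp)
    also have "\<dots> = (\<Sum>b\<in>UNIV. riem_low x e c b a * V x $ b)"
    proof (rule sum.cong[OF refl])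
      fix b
      have "riem_low x c e a b = riem_low x e c b a" using riem_low_antisym12[of x c e a b] riem_low_antisym34[OF x, of e c a b] by simp
      then show "riem_low x c e a b * V x $ b = riem_low x e c b a * V x $ b" by simp
    qed
    finally show ?thesis .
  qed
  have "(\<Sum>a\<in>UNIV. \<Sum>c\<in>UNIV. ginv g x $ a $ c * (\<Sum>d\<in>UNIV. riem g x c e a d * flat V [d] x))
      = (\<Sum>a\<in>UNIV. \<Sum>c\<in>UNIV. \<Sum>b\<in>UNIV. ginv g x $ a $ c * riem_low x e c b a * V x $ b)"
    by (simp add: 1 sum_distrib_left mult.assoc)
  also have "\<dots> = (\<Sum>b\<in>UNIV. (\<Sum>c\<in>UNIV. \<Sum>a\<in>UNIV. riem_low x e c b a * ginv g x $ a $ c) * V x $ b)"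
    by (subst sum3_321) (simp add: sum_distrib_right sum_distrib_left mult_ac)
  also have "\<dots> = (\<Sum>b\<in>UNIV. ric g e b x * V x $ b)"
    by (simp add: ric_eq_riem_low[OF x])
  finally show ?thesis .
qed

lemma covD_deformation:
  assumes x: "x \<in> U" and V: "\<And>i. smooth (\<lambda>y. V y $ i)"
  shows "covD g [False, False] (t2 (\<lambda>a b y. lie2 V (gt g) a b y - divV g V y * g y $ a $ b)) [c, a, e] x
    = covD g [False, False] (covD g [False] (flat V)) [c, a, e] x + covD g [False, False] (covD g [False] (flat V)) [c, e, a] x
      - pd c (divV g V) x * g x $ a $ e"
proof -
  let ?N1 = "covD g [False] (flat V)"
  have s1: "smooth_tensor ?N1" using V by simp
  have sA: "smooth_tensor (\<lambda>js y. ?N1 js y + ?N1 [js ! 1, js ! 0] y)" unfolding smooth_tensor_def using s1 by simp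
  have sA1: "smooth_tensor (\<lambda>js. ?N1 [js ! 1, js ! 0])" unfolding smooth_tensor_def using s1 by simp
  have sB: "smooth_tensor (\<lambda>js y. divV g V y * g y $ (js ! 0) $ (js ! 1))" unfolding smooth_tensor_def using V by simp
  have "covD g [False, False] (t2 (\<lambda>a b y. lie2 V (gt g) a b y - divV g V y * g y $ a $ b)) [c, a, e] x
     = covD g [False, False] (\<lambda>js y. (?N1 js y + ?N1 [js ! 1, js ! 0] y) - divV g V y * g y $ (js ! 0) $ (js ! 1)) [c, a, e] x"
  proof (rule covD_cong[OF x])
    fix js' :: "'n list" and y assume "length js' = length [a, e]" and y: "y \<in> U"
    then obtain p q where js': "js' = [p, q]" using length_eq_2D by force
    show "t2 (\<lambda>a b y. lie2 V (gt g) a b y - divV g V y * g y $ a $ b) js' y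
       = (?N1 js' y + ?N1 [js' ! 1, js' ! 0] y) - divV g V y * g y $ (js' ! 0) $ (js' ! 1)"
      using lie2_g_eq_flat[OF y V, of p q] unfolding js' by (simp add: t2_def)
  qed
  also have "\<dots> = covD g [False, False] (\<lambda>js y. ?N1 js y + ?N1 [js ! 1, js ! 0] y) [c, a, e] x
      - covD g [False, False] (\<lambda>js y. divV g V y * g y $ (js ! 0) $ (js ! 1)) [c, a, e] x"
    by (rule covD_diff[OF x sA sB])
  also have "covD g [False, False] (\<lambda>js y. ?N1 js y + ?N1 [js ! 1, js ! 0] y) [c, a, e] x
      = covD g [False, False] ?N1 [c, a, e] x + covD g [False, False] ?N1 [c, e, a] x"
    using covD_add[OF x s1 sA1] covD_FF_swap by simp
  also have "covD g [False, False] (\<lambda>js y. divV g V y * g y $ (js ! 0) $ (js ! 1)) [c, a, e] x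
      = pd c (divV g V) x * g x $ a $ e"
    using covD_scaled_g[OF x] V by simp
  finally show ?thesis .
qed

lemma ginv_g': "x \<in> U \<Longrightarrow> (\<Sum>k\<in>UNIV. ginv g x $ k $ i * g x $ k $ j) = (if i = j then 1 else 0)"
  using ginv_g[of x i j] ginv_sym[of x] by simp

lemma pd_divV:
  assumes x: "x \<in> U" and V: "\<And>i. smooth (\<lambda>y. V y $ i)"
  shows "pd e (divV g V) x = (\<Sum>a\<in>UNIV. \<Sum>c\<in>UNIV. ginv g x $ a $ c * covD g [False, False] (covD g [False] (flat V)) [e, c, a] x)"
proof -
  have "pd e (divV g V) x = pd e (\<lambda>y. \<Sum>a\<in>UNIV. \<Sum>c\<in>UNIV. ginv g y $ a $ c * covD g [False] (flat V) [c, a] y) x"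
    by (rule pd_cong[OF x]) (simp add: divV_eq_trace_flat V)
  also have "\<dots> = (\<Sum>a\<in>UNIV. \<Sum>c\<in>UNIV. ginv g x $ a $ c * covD g [False, False] (covD g [False] (flat V)) [e, c, a] x)"
    using V by (intro pd_ginv_trace[OF x]) simp
  finally show ?thesis .
qed

lemma ginv_g_trace:
  assumes x: "x \<in> U"
  shows "(\<Sum>a\<in>UNIV. \<Sum>c\<in>UNIV. ginv g x $ a $ c * (F c * g x $ a $ e)) = F e"
proof -
  have "(\<Sum>a\<in>UNIV. \<Sum>c\<in>UNIV. ginv g x $ a $ c * (F c * g x $ a $ e))
      = (\<Sum>c\<in>UNIV. F c * (\<Sum>a\<in>UNIV. ginv g x $ a $ c * g x $ a $ e))"
    by (subst sum.swap) (simp add: sum_distrib_left mult_ac)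
  also have "\<dots> = F e" by (simp add: ginv_g'[OF x])
  finally show ?thesis .
qed

lemma boxV_div_deformation_lowered:
  assumes x: "x \<in> U" and V: "\<And>i. smooth (\<lambda>y. V y $ i)"
  shows "- (\<Sum>c\<in>UNIV. \<Sum>d\<in>UNIV. ginv g x $ c $ d * covD g [False, False] (covD g [False] (flat V)) [c, d, e] x)
      + divT g (\<lambda>a b y. lie2 V (gt g) a b y - divV g V y * g y $ a $ b) e x
    = (\<Sum>b\<in>UNIV. ric g e b x * V x $ b)"
proof -
  let ?N2 = "covD g [False, False] (covD g [False] (flat V))"
  have s0: "smooth_tensor (flat V)" using V by simp
  txt \<open>The Ricci identity turns \<open>\<nabla>\<^sup>a\<nabla>\<^sub>e V\<^sub>a\<close> into \<open>\<nabla>\<^sub>e div V + R\<^sub>e\<^sub>b V\<^sup>b\<close>.\<close>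
  have ricci: "?N2 [c, e, a] x = ?N2 [e, c, a] x + (\<Sum>d\<in>UNIV. riem g x c e a d * flat V [d] x)" for c a
    using ricci_identity_1form[OF x s0, of c e a] by simp
  have sw: "(\<Sum>a\<in>UNIV. \<Sum>c\<in>UNIV. ginv g x $ a $ c * ?N2 [c, a, e] x) = (\<Sum>c\<in>UNIV. \<Sum>d\<in>UNIV. ginv g x $ c $ d * ?N2 [c, d, e] x)"
    by (subst sum.swap) (simp add: ginv_sym[OF x])
  have "divT g (\<lambda>a b y. lie2 V (gt g) a b y - divV g V y * g y $ a $ b) e x
     = (\<Sum>a\<in>UNIV. \<Sum>c\<in>UNIV. ginv g x $ a $ c * (?N2 [c, a, e] x + ?N2 [c, e, a] x - pd c (divV g V) x * g x $ a $ e))"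
    unfolding divT_def using covD_deformation[OF x V] by simp
  also have "\<dots> = (\<Sum>a\<in>UNIV. \<Sum>c\<in>UNIV. ginv g x $ a $ c * ?N2 [c, a, e] x)
      + (\<Sum>a\<in>UNIV. \<Sum>c\<in>UNIV. ginv g x $ a $ c * ?N2 [e, c, a] x)
      + (\<Sum>a\<in>UNIV. \<Sum>c\<in>UNIV. ginv g x $ a $ c * (\<Sum>d\<in>UNIV. riem g x c e a d * flat V [d] x))
      - (\<Sum>a\<in>UNIV. \<Sum>c\<in>UNIV. ginv g x $ a $ c * (pd c (divV g V) x * g x $ a $ e))"
    by (simp add: ricci distrib_left right_diff_distrib sum.distrib sum_subtractf)
  also have "\<dots> = (\<Sum>c\<in>UNIV. \<Sum>d\<in>UNIV. ginv g x $ c $ d * ?N2 [c, d, e] x) + (\<Sum>b\<in>UNIV. ric g e b x * V x $ b)"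
    unfolding ginv_g_trace[OF x] pd_divV[OF x V] sw trace_riem_flat[OF x] by simp
  finally show ?thesis by simp
qed

lemma boxV_div_deformation:
  assumes x: "x \<in> U" and V: "\<And>i. smooth (\<lambda>y. V y $ i)"
  shows "boxV g V x + raise g (divT g (\<lambda>a b y. lie2 V (gt g) a b y - divV g V y * g y $ a $ b)) x = ricV g V x"
proof -
  let ?N2 = "covD g [False, False] (covD g [False] (flat V))"
  let ?D = "divT g (\<lambda>a b y. lie2 V (gt g) a b y - divV g V y * g y $ a $ b)"
  let ?X = "\<lambda>e. - (\<Sum>c\<in>UNIV. \<Sum>d\<in>UNIV. ginv g x $ c $ d * ?N2 [c, d, e] x)"
  have bx: "boxV g V x $ a = (\<Sum>e\<in>UNIV. ginv g x $ a $ e * ?X e)" for a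
  proof -
    have "boxV g V x $ a = - (\<Sum>c\<in>UNIV. \<Sum>d\<in>UNIV. \<Sum>e\<in>UNIV. ginv g x $ c $ d * (ginv g x $ a $ e * ?N2 [c, d, e] x))"
      by (simp add: boxV_def covD2_vt_eq_ginv[OF x V] sum_distrib_left)
    also have "\<dots> = (\<Sum>e\<in>UNIV. ginv g x $ a $ e * ?X e)"
      by (subst sum3_312) (simp add: sum_distrib_left sum_negf mult_ac)
    finally show ?thesis .
  qed
  show ?thesis
  proof (subst vec_eq_iff, rule allI)
    fix a
    have "(boxV g V x + raise g ?D x) $ a = (\<Sum>e\<in>UNIV. ginv g x $ a $ e * (?X e + ?D e x))"
      by (simp add: bx raise_def distrib_left sum.distrib sum_negf right_diff_distrib sum_subtractf)
    also have "\<dots> = (\<Sum>e\<in>UNIV. ginv g x $ a $ e * (\<Sum>b\<in>UNIV. ric g e b x * V x $ b))"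
      using boxV_div_deformation_lowered[OF x V] by simp
    also have "\<dots> = ricV g V x $ a"
      by (simp add: ricV_def sum_distrib_left mult_ac, subst sum.swap, simp)
    finally show "(boxV g V x + raise g ?D x) $ a = ricV g V x $ a" .
  qed
qed

section \<open>The second identity\<close>

lemma smooth_boxV [simp]: "(\<And>i. smooth (\<lambda>y. W y $ i)) \<Longrightarrow> smooth (\<lambda>y. boxV g W y $ a)"
  unfolding boxV_def by simp

lemma smooth_ricV [simp]: "(\<And>i. smooth (\<lambda>y. W y $ i)) \<Longrightarrow> smooth (\<lambda>y. ricV g W y $ a)"
  unfolding ricV_def by simp

lemma boxT_lie2_g:
  assumes x: "x \<in> U" and V: "\<And>i. smooth (\<lambda>y. V y $ i)"
  shows "boxT g (lie2 V (gt g)) a b x = - (\<Sum>c\<in>UNIV. \<Sum>d\<in>UNIV. ginv g x $ c $ d *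
     (covD g [False, False, False] (covD g [False, False] (covD g [False] (flat V))) [c, d, a, b] x
      + covD g [False, False, False] (covD g [False, False] (covD g [False] (flat V))) [c, d, b, a] x))"
proof -
  let ?N1 = "covD g [False] (flat V)"
  let ?N2 = "covD g [False, False] ?N1"
  have s1: "smooth_tensor ?N1" using V by simp
  have s2: "smooth_tensor ?N2" using V by simp
  have sA1: "smooth_tensor (\<lambda>js. ?N1 [js ! 1, js ! 0])" unfolding smooth_tensor_def using s1 by simp
  have sB1: "smooth_tensor (\<lambda>js. ?N2 [js ! 0, js ! 2, js ! 1])" unfolding smooth_tensor_def using s2 by simp
  have step: "covD g [False, False] (t2 (lie2 V (gt g))) js y = ?N2 js y + ?N2 [js ! 0, js ! 2, js ! 1] y"
    if y: "y \<in> U" and l: "length js = Suc (Suc (Suc 0))" for js y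
  proof -
    obtain d a' b' where js: "js = [d, a', b']" using length_eq_3D[OF l] by blast
    have "covD g [False, False] (t2 (lie2 V (gt g))) [d, a', b'] y
       = covD g [False, False] (\<lambda>js y. ?N1 js y + ?N1 [js ! 1, js ! 0] y) [d, a', b'] y"
    proof (rule covD_cong[OF y])
      fix js' :: "'n list" and z assume "length js' = length [a', b']" and z: "z \<in> U"
      then obtain p q where js': "js' = [p, q]" using length_eq_2D by force
      show "t2 (lie2 V (gt g)) js' z = ?N1 js' z + ?N1 [js' ! 1, js' ! 0] z"
        using lie2_g_eq_flat[OF z V, of p q] unfolding js' by (simp add: t2_def)
    qed
    also have "\<dots> = ?N2 [d, a', b'] y + ?N2 [d, b', a'] y"
      using covD_add[OF y s1 sA1] covD_FF_swap by simp
    finally show ?thesis using js by simp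
  qed
  have "covD g [False, False, False] (covD g [False, False] (t2 (lie2 V (gt g)))) [c, d, a, b] x
     = covD g [False, False, False] (\<lambda>js y. ?N2 js y + ?N2 [js ! 0, js ! 2, js ! 1] y) [c, d, a, b] x" for c d
    by (rule covD_cong[OF x]) (simp add: step)
  also have "\<dots> c d = covD g [False, False, False] ?N2 [c, d, a, b] x + covD g [False, False, False] ?N2 [c, d, b, a] x" for c d
    using covD_add[OF x s2 sB1] covD_FFF_swap12 by simp
  finally show ?thesis unfolding boxT_def by simp
qed

lemma flat_boxV:
  assumes y: "y \<in> U" and V: "\<And>i. smooth (\<lambda>y. V y $ i)"
  shows "flat (boxV g V) [b] y = - (\<Sum>c\<in>UNIV. \<Sum>d\<in>UNIV. ginv g y $ c $ d * covD g [False, False] (covD g [False] (flat V)) [c, d, b] y)"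
proof -
  have "flat (boxV g V) [b] y = - (\<Sum>a\<in>UNIV. \<Sum>c\<in>UNIV. \<Sum>d\<in>UNIV. g y $ b $ a * (ginv g y $ c $ d * covD g [False, True] (covD g [True] (vt V)) [c, d, a] y))"
    by (simp add: flat_def boxV_def sum_distrib_left sum_negf)
  also have "\<dots> = - (\<Sum>c\<in>UNIV. \<Sum>d\<in>UNIV. ginv g y $ c $ d * (\<Sum>a\<in>UNIV. g y $ b $ a * covD g [False, True] (covD g [True] (vt V)) [c, d, a] y))"
    by (subst sum3_231) (simp add: sum_distrib_left mult_ac)
  also have "\<dots> = - (\<Sum>c\<in>UNIV. \<Sum>d\<in>UNIV. ginv g y $ c $ d * covD g [False, False] (covD g [False] (flat V)) [c, d, b] y)"
    by (simp add: covD2_flat[OF y V])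
  finally show ?thesis .
qed

lemma covD_flat_boxV:
  assumes x: "x \<in> U" and V: "\<And>i. smooth (\<lambda>y. V y $ i)"
  shows "covD g [False] (flat (boxV g V)) [a, b] x
    = - (\<Sum>c\<in>UNIV. \<Sum>d\<in>UNIV. ginv g x $ c $ d *
          covD g [False, False, False] (covD g [False, False] (covD g [False] (flat V))) [a, c, d, b] x)"
proof -
  let ?N2 = "covD g [False, False] (covD g [False] (flat V))"
  have "covD g [False] (flat (boxV g V)) [a, b] x = - covD g [False] (\<lambda>js y. - flat (boxV g V) js y) [a, b] x"
    using V by (simp add: covD_minus[OF x])
  also have "covD g [False] (\<lambda>js y. - flat (boxV g V) js y) [a, b] x
      = covD g [False] (\<lambda>js y. \<Sum>c\<in>UNIV. \<Sum>d\<in>UNIV. ginv g y $ c $ d * ?N2 [c, d, js ! 0] y) [a, b] x"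
  proof (rule covD_cong[OF x])
    fix js' :: "'n list" and y assume "length js' = length [b]" and y: "y \<in> U"
    then obtain p where js': "js' = [p]" using length_eq_1D by force
    show "- flat (boxV g V) js' y = (\<Sum>c\<in>UNIV. \<Sum>d\<in>UNIV. ginv g y $ c $ d * ?N2 [c, d, js' ! 0] y)"
      using flat_boxV[OF y V, of p] unfolding js' by simp
  qed
  also have "\<dots> = (\<Sum>c\<in>UNIV. \<Sum>d\<in>UNIV. ginv g x $ c $ d * covD g [False, False, False] ?N2 [a, c, d, b] x)"
    using V by (intro covD_ginv_trace[OF x]) simp
  finally show ?thesis .
qed

lemma trace_covD3_flat:
  assumes x: "x \<in> U" and V: "\<And>i. smooth (\<lambda>y. V y $ i)"
  shows "(\<Sum>c\<in>UNIV. \<Sum>d\<in>UNIV. ginv g x $ c $ d *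
      covD g [False, False, False] (covD g [False, False] (covD g [False] (flat V))) [c, d, a, b] x)
   = - covD g [False] (flat (boxV g V)) [a, b] x
     + (\<Sum>c\<in>UNIV. \<Sum>d\<in>UNIV. ginv g x $ c $ d *
        ((\<Sum>e\<in>UNIV. riem g x c a d e * covD g [False] (flat V) [e, b] x)
        + (\<Sum>e\<in>UNIV. riem g x c a b e * covD g [False] (flat V) [d, e] x)
        + (\<Sum>e\<in>UNIV. covD g [False, False, False, True] riem_tensor [c, d, a, b, e] x * flat V [e] x)
        + (\<Sum>e\<in>UNIV. riem g x d a b e * covD g [False] (flat V) [c, e] x)))"
proof -
  let ?N1 = "covD g [False] (flat V)"
  let ?N3 = "covD g [False, False, False] (covD g [False, False] ?N1)"
  let ?X = "\<lambda>c d. (\<Sum>e\<in>UNIV. riem g x c a d e * ?N1 [e, b] x)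
        + (\<Sum>e\<in>UNIV. riem g x c a b e * ?N1 [d, e] x)
        + (\<Sum>e\<in>UNIV. covD g [False, False, False, True] riem_tensor [c, d, a, b, e] x * flat V [e] x)
        + (\<Sum>e\<in>UNIV. riem g x d a b e * ?N1 [c, e] x)"
  have s0: "smooth_tensor (flat V)" and s1: "smooth_tensor ?N1" using V by simp_all
  txt \<open>Move \<open>\<nabla>\<^sub>a\<close> to the front: first past \<open>\<nabla>\<^sub>c\<close> (Ricci identity for the 2-tensor \<open>\<nabla>V\<^sup>\<flat>\<close>),
    then past \<open>\<nabla>\<^sub>d\<close> inside \<open>\<nabla>\<^sub>c\<close> (differentiated Ricci identity for \<open>V\<^sup>\<flat>\<close>).\<close>
  have "?N3 [c, d, a, b] x = ?N3 [a, c, d, b] x + ?X c d" for c d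
    using covD_ricci_identity_1form[OF x s0, of c d a b] ricci_identity_2tensor[OF x s1, of c a d b] by simp
  then have "(\<Sum>c\<in>UNIV. \<Sum>d\<in>UNIV. ginv g x $ c $ d * ?N3 [c, d, a, b] x)
     = (\<Sum>c\<in>UNIV. \<Sum>d\<in>UNIV. ginv g x $ c $ d * ?N3 [a, c, d, b] x) + (\<Sum>c\<in>UNIV. \<Sum>d\<in>UNIV. ginv g x $ c $ d * ?X c d)"
    by (simp only: distrib_left sum.distrib)
  then show ?thesis unfolding covD_flat_boxV[OF x V] by simp
qed

lemma t2_ric: "t2 (ric g) = ric_tensor"
  by (rule ext)+ (simp add: t2_def ric_tensor_def)

lemma lie2_ric:
  assumes x: "x \<in> U" and V: "\<And>i. smooth (\<lambda>y. V y $ i)"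
  shows "lie2 V (ric g) a b x = (\<Sum>c\<in>UNIV. V x $ c * covD g [False, False] ric_tensor [c, a, b] x)
     + (\<Sum>d\<in>UNIV. ric g b d x * covD g [True] (vt V) [a, d] x) + (\<Sum>d\<in>UNIV. ric g a d x * covD g [True] (vt V) [b, d] x)"
  using lie2_eq_covD[OF x V, of "ric g" a b] ric_sym[OF x] by (simp add: t2_ric)

lemma flat_ricV:
  assumes y: "y \<in> U"
  shows "flat (ricV g V) [b] y = (\<Sum>d\<in>UNIV. ric g b d y * V y $ d)"
proof -
  have "flat (ricV g V) [b] y = (\<Sum>d\<in>UNIV. \<Sum>c\<in>UNIV. (\<Sum>a\<in>UNIV. g y $ b $ a * ginv g y $ a $ c) * (ric g c d y * V y $ d))"
    unfolding flat_def ricV_def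
    apply (simp add: sum_distrib_left sum_distrib_right mult_ac)
    by (subst sum3_231) (simp add: mult_ac)
  also have "\<dots> = (\<Sum>d\<in>UNIV. ric g b d y * V y $ d)"
    by (simp add: g_ginv[OF y])
  finally show ?thesis .
qed

lemma covD_flat_ricV:
  assumes x: "x \<in> U" and V: "\<And>i. smooth (\<lambda>y. V y $ i)"
  shows "covD g [False] (flat (ricV g V)) [a, b] x = (\<Sum>d\<in>UNIV. covD g [False, False] ric_tensor [a, b, d] x * V x $ d)
      + (\<Sum>d\<in>UNIV. ric g b d x * covD g [True] (vt V) [a, d] x)"
proof -
  have "covD g [False] (flat (ricV g V)) [a, b] x = covD g [False] (\<lambda>js y. \<Sum>d\<in>UNIV. ric g (js ! 0) d y * V y $ d) [a, b] x"
  proof (rule covD_cong[OF x])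
    fix js' :: "'n list" and y assume "length js' = length [b]" and y: "y \<in> U"
    then obtain p where js': "js' = [p]" using length_eq_1D by force
    show "flat (ricV g V) js' y = (\<Sum>d\<in>UNIV. ric g (js' ! 0) d y * V y $ d)"
      using flat_ricV[OF y] unfolding js' by simp
  qed
  also have "\<dots> = (\<Sum>d\<in>UNIV. covD g [False, False] ric_tensor [a, b, d] x * V x $ d)
      + (\<Sum>d\<in>UNIV. ric g b d x * covD g [True] (vt V) [a, d] x)"
    by (rule covD_ric_contract[OF x V])
  finally show ?thesis .
qed

lemma ginv_covD_flat:
  assumes x: "x \<in> U" and V: "\<And>i. smooth (\<lambda>y. V y $ i)"
  shows "(\<Sum>c\<in>UNIV. ginv g x $ c $ d * covD g [False] (flat V) [b, c] x) = covD g [True] (vt V) [b, d] x"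
proof -
  have "(\<Sum>c\<in>UNIV. ginv g x $ c $ d * covD g [False] (flat V) [b, c] x)
      = (\<Sum>f\<in>UNIV. (\<Sum>c\<in>UNIV. ginv g x $ d $ c * g x $ c $ f) * covD g [True] (vt V) [b, f] x)"
    apply (simp add: covD_flat[OF x V] sum_distrib_left sum_distrib_right mult_ac)
    by (subst sum.swap) (simp add: ginv_sym[OF x, of _ d])
  also have "\<dots> = covD g [True] (vt V) [b, d] x" by (simp add: ginv_g[OF x])
  finally show ?thesis .
qed

lemma ricT_lie2_g:
  assumes x: "x \<in> U" and V: "\<And>i. smooth (\<lambda>y. V y $ i)"
  shows "ricT g (lie2 V (gt g)) a b x = (\<Sum>c\<in>UNIV. \<Sum>d\<in>UNIV. ginv g x $ c $ d * ric g a d x * covD g [False] (flat V) [c, b] x)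
     + (\<Sum>d\<in>UNIV. ric g a d x * covD g [True] (vt V) [b, d] x)"
proof -
  have "ricT g (lie2 V (gt g)) a b x = (\<Sum>c\<in>UNIV. \<Sum>d\<in>UNIV. ginv g x $ c $ d * ric g a d x * covD g [False] (flat V) [c, b] x)
     + (\<Sum>c\<in>UNIV. \<Sum>d\<in>UNIV. ginv g x $ c $ d * ric g a d x * covD g [False] (flat V) [b, c] x)"
    by (simp add: ricT_def lie2_g_eq_flat[OF x V] distrib_left sum.distrib)
  also have "(\<Sum>c\<in>UNIV. \<Sum>d\<in>UNIV. ginv g x $ c $ d * ric g a d x * covD g [False] (flat V) [b, c] x)
      = (\<Sum>d\<in>UNIV. ric g a d x * (\<Sum>c\<in>UNIV. ginv g x $ c $ d * covD g [False] (flat V) [b, c] x))"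
    by (subst sum.swap) (simp add: sum_distrib_left mult_ac)
  also have "\<dots> = (\<Sum>d\<in>UNIV. ric g a d x * covD g [True] (vt V) [b, d] x)"
    by (simp add: ginv_covD_flat[OF x V])
  finally show ?thesis .
qed

lemma ginv_riem_trace:
  assumes x: "x \<in> U"
  shows "(\<Sum>c\<in>UNIV. \<Sum>d\<in>UNIV. ginv g x $ c $ d * riem g x c a d e) = (\<Sum>k\<in>UNIV. ric g a k x * ginv g x $ k $ e)"
proof -
  have "(\<Sum>c\<in>UNIV. \<Sum>d\<in>UNIV. ginv g x $ c $ d * riem g x c a d e)
     = (\<Sum>c\<in>UNIV. \<Sum>d\<in>UNIV. \<Sum>k\<in>UNIV. ginv g x $ c $ d * riem_low x a c k d * ginv g x $ k $ e)"
  proof (intro sum.cong refl)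
    fix c d
    have "riem_low x c a d k = riem_low x a c k d" for k using riem_low_antisym12[of x c a d k] riem_low_antisym34[OF x, of a c d k] by simp
    then have "riem g x c a d e = (\<Sum>k\<in>UNIV. riem_low x a c k d * ginv g x $ k $ e)"
      using riem_eq_riem_low_ginv[OF x, of c a d e] by simp
    then show "ginv g x $ c $ d * riem g x c a d e = (\<Sum>k\<in>UNIV. ginv g x $ c $ d * riem_low x a c k d * ginv g x $ k $ e)"
      by (simp add: sum_distrib_left mult.assoc)
  qed
  also have "\<dots> = (\<Sum>k\<in>UNIV. (\<Sum>c\<in>UNIV. \<Sum>d\<in>UNIV. riem_low x a c k d * ginv g x $ d $ c) * ginv g x $ k $ e)"
    apply (simp only: sum_distrib_right)
    apply (subst sum3_312[of "\<lambda>c d k. ginv g x $ c $ d * riem_low x a c k d * ginv g x $ k $ e"])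
    apply (intro sum.cong refl)
    apply (simp add: ginv_sym[OF x])
    done
  also have "\<dots> = (\<Sum>k\<in>UNIV. ric g a k x * ginv g x $ k $ e)" by (simp add: ric_eq_riem_low[OF x])
  finally show ?thesis .
qed

lemma ginv_riem_trace_contract:
  assumes x: "x \<in> U"
  shows "(\<Sum>c\<in>UNIV. \<Sum>d\<in>UNIV. ginv g x $ c $ d * (\<Sum>e\<in>UNIV. riem g x c a d e * N [e, b] x))
     = (\<Sum>c\<in>UNIV. \<Sum>d\<in>UNIV. ginv g x $ c $ d * ric g a d x * N [c, b] x)"
proof -
  have "(\<Sum>c\<in>UNIV. \<Sum>d\<in>UNIV. ginv g x $ c $ d * (\<Sum>e\<in>UNIV. riem g x c a d e * N [e, b] x))
      = (\<Sum>e\<in>UNIV. (\<Sum>c\<in>UNIV. \<Sum>d\<in>UNIV. ginv g x $ c $ d * riem g x c a d e) * N [e, b] x)"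
    apply (simp only: sum_distrib_left sum_distrib_right)
    apply (subst sum3_312[of "\<lambda>c d e. ginv g x $ c $ d * (riem g x c a d e * N [e, b] x)"])
    apply (intro sum.cong refl)
    apply (simp add: mult_ac)
    done
  also have "\<dots> = (\<Sum>e\<in>UNIV. \<Sum>k\<in>UNIV. ric g a k x * ginv g x $ k $ e * N [e, b] x)"
    by (simp add: ginv_riem_trace[OF x] sum_distrib_right)
  also have "\<dots> = (\<Sum>c\<in>UNIV. \<Sum>d\<in>UNIV. ginv g x $ c $ d * ric g a d x * N [c, b] x)"
    apply (intro sum.cong refl)
    apply (simp add: ginv_sym[OF x] mult_ac)
    done
  finally show ?thesis .
qed

text \<open>Minus \<open>Riem(N)\<close> of the statement, since \<open>R\<^sub>e\<^sub>a\<^sub>b\<^sup>d = -R\<^sub>a\<^sub>e\<^sub>b\<^sup>d\<close>.\<close>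
definition riem_action :: "('n list \<Rightarrow> real^'n \<Rightarrow> real) \<Rightarrow> real^'n \<Rightarrow> 'n \<Rightarrow> 'n \<Rightarrow> real" where
  "riem_action N x a b = (\<Sum>c\<in>UNIV. \<Sum>d\<in>UNIV. \<Sum>e\<in>UNIV. ginv g x $ c $ e * riem g x e a b d * N [c, d] x)"

lemma riem_action_alt1:
  assumes x: "x \<in> U"
  shows "(\<Sum>c\<in>UNIV. \<Sum>d\<in>UNIV. ginv g x $ c $ d * (\<Sum>e\<in>UNIV. riem g x c a b e * N [d, e] x)) = riem_action N x a b"
  unfolding riem_action_def
  apply (simp only: sum_distrib_left)
  apply (subst sum3_312[of "\<lambda>c d e. ginv g x $ c $ e * riem g x e a b d * N [c, d] x"])
  apply (intro sum.cong refl)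
  apply (simp add: ginv_sym[OF x] mult_ac)
  done

lemma riem_action_alt2:
  assumes x: "x \<in> U"
  shows "(\<Sum>c\<in>UNIV. \<Sum>d\<in>UNIV. ginv g x $ c $ d * (\<Sum>e\<in>UNIV. riem g x d a b e * N [c, e] x)) = riem_action N x a b"
  unfolding riem_action_def
  apply (simp only: sum_distrib_left)
  apply (subst sum3_132[of "\<lambda>c d e. ginv g x $ c $ e * riem g x e a b d * N [c, d] x"])
  apply (intro sum.cong refl)
  apply (simp add: mult_ac)
  done

lemma ginv_riem_pair_sym:
  assumes x: "x \<in> U"
  shows "(\<Sum>e\<in>UNIV. ginv g x $ d $ e * riem g x a e b c) = (\<Sum>e\<in>UNIV. ginv g x $ c $ e * riem g x b e a d)"
proof -
  have L: "(\<Sum>e\<in>UNIV. ginv g x $ d $ e * riem g x a e b c) = (\<Sum>e\<in>UNIV. \<Sum>f\<in>UNIV. ginv g x $ d $ e * riem_low x a e b f * ginv g x $ f $ c)"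
    by (simp add: riem_eq_riem_low_ginv[OF x, of a _ b c] sum_distrib_left mult.assoc)
  have R: "(\<Sum>e\<in>UNIV. ginv g x $ c $ e * riem g x b e a d) = (\<Sum>e\<in>UNIV. \<Sum>f\<in>UNIV. ginv g x $ c $ e * riem_low x b e a f * ginv g x $ f $ d)"
    by (simp add: riem_eq_riem_low_ginv[OF x, of b _ a d] sum_distrib_left mult.assoc)
  have "(\<Sum>e\<in>UNIV. \<Sum>f\<in>UNIV. ginv g x $ c $ e * riem_low x b e a f * ginv g x $ f $ d)
      = (\<Sum>f\<in>UNIV. \<Sum>e\<in>UNIV. ginv g x $ c $ e * riem_low x b e a f * ginv g x $ f $ d)"
    by (rule sum.swap)
  also have "\<dots> = (\<Sum>e\<in>UNIV. \<Sum>f\<in>UNIV. ginv g x $ d $ e * riem_low x a e b f * ginv g x $ f $ c)"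
  proof (intro sum.cong refl)
    fix e f
    have "riem_low x b f a e = riem_low x a e b f" by (rule riem_low_pair_sym[OF x])
    then show "ginv g x $ c $ f * riem_low x b f a e * ginv g x $ e $ d = ginv g x $ d $ e * riem_low x a e b f * ginv g x $ f $ c"
      using ginv_sym[OF x, of c f] ginv_sym[OF x, of e d] by (simp add: mult_ac)
  qed
  finally show ?thesis using L R by simp
qed

lemma riem_action_symmetrised:
  assumes x: "x \<in> U"
  shows "(\<Sum>c\<in>UNIV. \<Sum>d\<in>UNIV. \<Sum>e\<in>UNIV. ginv g x $ c $ e * riem g x a e b d * (N [c, d] x + N [d, c] x))
     = - (riem_action N x a b + riem_action N x b a)"
proof -
  have 1: "(\<Sum>c\<in>UNIV. \<Sum>d\<in>UNIV. \<Sum>e\<in>UNIV. ginv g x $ c $ e * riem g x a e b d * N [c, d] x) = - riem_action N x a b"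
    unfolding riem_action_def by (simp add: riem_antisym[of x a] sum_negf)
  have "(\<Sum>c\<in>UNIV. \<Sum>d\<in>UNIV. \<Sum>e\<in>UNIV. ginv g x $ c $ e * riem g x a e b d * N [d, c] x)
      = (\<Sum>c\<in>UNIV. \<Sum>d\<in>UNIV. (\<Sum>e\<in>UNIV. ginv g x $ c $ e * riem g x a e b d) * N [d, c] x)"
    by (simp add: sum_distrib_right)
  also have "\<dots> = (\<Sum>c\<in>UNIV. \<Sum>d\<in>UNIV. (\<Sum>e\<in>UNIV. ginv g x $ d $ e * riem g x b e a c) * N [d, c] x)"
    by (simp add: ginv_riem_pair_sym[OF x])
  also have "\<dots> = (\<Sum>d\<in>UNIV. \<Sum>c\<in>UNIV. (\<Sum>e\<in>UNIV. ginv g x $ d $ e * riem g x b e a c) * N [d, c] x)"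
    by (rule sum.swap)
  also have "\<dots> = - riem_action N x b a"
    unfolding riem_action_def
    apply (simp only: sum_distrib_right sum_negf[symmetric])
    apply (intro sum.cong refl)
    apply (simp add: riem_antisym[of x b])
    done
  finally have 2: "(\<Sum>c\<in>UNIV. \<Sum>d\<in>UNIV. \<Sum>e\<in>UNIV. ginv g x $ c $ e * riem g x a e b d * N [d, c] x) = - riem_action N x b a" .
  show ?thesis using 1 2 by (simp add: distrib_left sum.distrib)
qed

lemma riem_flat_eq_g_riem:
  assumes y: "y \<in> U"
  shows "(\<Sum>e\<in>UNIV. riem g y d a b e * flat V [e] y) = - (\<Sum>e\<in>UNIV. \<Sum>k\<in>UNIV. g y $ d $ k * riem g y b e a k * V y $ e)"
proof -
  have L: "(\<Sum>e\<in>UNIV. riem g y d a b e * flat V [e] y) = (\<Sum>f\<in>UNIV. riem_low y d a b f * V y $ f)"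
    unfolding flat_def riem_low_def
    apply (simp only: sum_distrib_left sum_distrib_right)
    apply (subst sum.swap)
    apply (intro sum.cong refl)
    apply (simp add: mult_ac)
    done
  have R: "(\<Sum>e\<in>UNIV. \<Sum>k\<in>UNIV. g y $ d $ k * riem g y b e a k * V y $ e) = (\<Sum>e\<in>UNIV. riem_low y b e a d * V y $ e)"
    unfolding riem_low_def
    apply (simp only: sum_distrib_right)
    apply (intro sum.cong refl)
    apply (simp add: g_sym[OF y, of d] mult_ac)
    done
  have "riem_low y b e a d = - riem_low y d a b e" for e
    using riem_low_pair_sym[OF y, of b e a d] riem_low_antisym12[of y a d b e] by simp
  then show ?thesis unfolding L R by (simp add: sum_negf)
qed

lemma ginv_g_contract:
  assumes x: "x \<in> U"
  shows "(\<Sum>d\<in>UNIV. ginv g x $ c $ d * (\<Sum>e\<in>UNIV. \<Sum>k\<in>UNIV. g x $ d $ k * F e k)) = (\<Sum>e\<in>UNIV. F e c)"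
proof -
  have "(\<Sum>d\<in>UNIV. ginv g x $ c $ d * (\<Sum>e\<in>UNIV. \<Sum>k\<in>UNIV. g x $ d $ k * F e k))
      = (\<Sum>e\<in>UNIV. \<Sum>k\<in>UNIV. (\<Sum>d\<in>UNIV. ginv g x $ c $ d * g x $ d $ k) * F e k)"
    apply (simp only: sum_distrib_left sum_distrib_right)
    apply (subst sum3_231[of "\<lambda>d e k. ginv g x $ c $ d * (g x $ d $ k * F e k)"])
    apply (intro sum.cong refl)
    apply (simp add: mult_ac)
    done
  also have "\<dots> = (\<Sum>e\<in>UNIV. F e c)" by (simp add: ginv_g[OF x])
  finally show ?thesis .
qed

lemma trace_riem_covD_flat:
  assumes x: "x \<in> U" and V: "\<And>i. smooth (\<lambda>y. V y $ i)"
  shows "(\<Sum>c\<in>UNIV. \<Sum>d\<in>UNIV. ginv g x $ c $ d * (\<Sum>e\<in>UNIV. riem g x d a b e * covD g [False] (flat V) [c, e] x))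
     = - (\<Sum>c\<in>UNIV. \<Sum>e\<in>UNIV. riem g x b e a c * covD g [True] (vt V) [c, e] x)"
proof -
  have 1: "(\<Sum>e\<in>UNIV. riem g x d a b e * covD g [False] (flat V) [c, e] x) = - (\<Sum>f\<in>UNIV. riem_low x b f a d * covD g [True] (vt V) [c, f] x)" for c d
  proof -
    have "(\<Sum>e\<in>UNIV. riem g x d a b e * covD g [False] (flat V) [c, e] x) = (\<Sum>f\<in>UNIV. riem_low x d a b f * covD g [True] (vt V) [c, f] x)"
      unfolding covD_flat[OF x V] riem_low_def
      apply (simp only: sum_distrib_left sum_distrib_right)
      apply (subst sum.swap)
      apply (intro sum.cong refl)
      apply (simp add: mult_ac)
      done
    moreover have "riem_low x d a b f = - riem_low x b f a d" for f
      using riem_low_pair_sym[OF x, of d a b f] riem_low_antisym34[OF x, of b f d a] by simp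
    ultimately show ?thesis by (simp add: sum_negf)
  qed
  have "(\<Sum>c\<in>UNIV. \<Sum>d\<in>UNIV. ginv g x $ c $ d * (\<Sum>e\<in>UNIV. riem g x d a b e * covD g [False] (flat V) [c, e] x))
     = - (\<Sum>c\<in>UNIV. \<Sum>f\<in>UNIV. (\<Sum>d\<in>UNIV. riem_low x b f a d * ginv g x $ d $ c) * covD g [True] (vt V) [c, f] x)"
    unfolding 1
    apply (simp only: sum_distrib_left sum_distrib_right sum_negf[symmetric] mult_minus_right)
    apply (subst sum3_132[of "\<lambda>c d f. - (ginv g x $ c $ d * (riem_low x b f a d * covD g [True] (vt V) [c, f] x))"])
    apply (intro sum.cong refl)
    apply (simp add: ginv_sym[OF x] mult_ac)
    done
  also have "\<dots> = - (\<Sum>c\<in>UNIV. \<Sum>e\<in>UNIV. riem g x b e a c * covD g [True] (vt V) [c, e] x)"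
    by (simp add: riem_eq_riem_low_ginv[OF x, of b _ a])
  finally show ?thesis .
qed

lemma covD_riem_flat:
  assumes x: "x \<in> U" and V: "\<And>i. smooth (\<lambda>y. V y $ i)"
  shows "(\<Sum>e\<in>UNIV. covD g [False, False, False, True] riem_tensor [c, d, a, b, e] x * flat V [e] x)
      = - (\<Sum>e\<in>UNIV. \<Sum>k\<in>UNIV. g x $ d $ k * (covD g [False, False, False, True] riem_tensor [c, b, e, a, k] x * V x $ e
            + riem g x b e a k * covD g [True] (vt V) [c, e] x))
        - (\<Sum>e\<in>UNIV. riem g x d a b e * covD g [False] (flat V) [c, e] x)"
proof -
  let ?Y = "\<lambda>js y. \<Sum>e\<in>UNIV. riem g y (js ! 0) (js ! 1) (js ! 2) e * flat V [e] y"
  let ?Z = "\<lambda>js y. \<Sum>e\<in>UNIV. \<Sum>k\<in>UNIV. g y $ (js ! 0) $ k * riem g y (js ! 2) e (js ! 1) k * V y $ e"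
  have s0: "smooth_tensor (flat V)" using V by simp
  have sZ: "smooth_tensor ?Z" unfolding smooth_tensor_def using V by simp
  txt \<open>Both \<open>?Y\<close> and \<open>?Z\<close> are \<open>R\<^sub>d\<^sub>a\<^sub>b\<^sub>e V\<^sup>e\<close> up to sign; differentiating each by the Leibniz rule
    relates the two expansions.\<close>
  have "covD g [False, False, False] ?Y [c, d, a, b] x = covD g [False, False, False] (\<lambda>js y. - ?Z js y) [c, d, a, b] x"
  proof (rule covD_cong[OF x])
    fix js' :: "'n list" and y assume "length js' = length [d, a, b]" and y: "y \<in> U"
    then obtain p q r where js': "js' = [p, q, r]" using length_eq_3D by force
    show "?Y js' y = - ?Z js' y" using riem_flat_eq_g_riem[OF y, of p q r] unfolding js' by simp
  qed
  also have "\<dots> = - covD g [False, False, False] ?Z [c, d, a, b] x" by (rule covD_minus[OF x sZ])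
  finally show ?thesis
    using covD_riem_contract[OF x s0, of c d a b] covD_g_riem_contract[OF x V, of c d a b] by simp
qed

lemma trace_covD_riem_flat:
  assumes x: "x \<in> U" and V: "\<And>i. smooth (\<lambda>y. V y $ i)"
  shows "(\<Sum>c\<in>UNIV. \<Sum>d\<in>UNIV. ginv g x $ c $ d * (\<Sum>e\<in>UNIV. covD g [False, False, False, True] riem_tensor [c, d, a, b, e] x * flat V [e] x))
     = - (\<Sum>e\<in>UNIV. V x $ e * (covD g [False, False] ric_tensor [e, b, a] x - covD g [False, False] ric_tensor [b, e, a] x))"
proof -
  let ?N1 = "covD g [False] (flat V)"
  let ?nV = "covD g [True] (vt V)"
  let ?DR = "covD g [False, False, False, True] riem_tensor"
  have "(\<Sum>c\<in>UNIV. \<Sum>d\<in>UNIV. ginv g x $ c $ d * (\<Sum>e\<in>UNIV. ?DR [c, d, a, b, e] x * flat V [e] x))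
     = - (\<Sum>c\<in>UNIV. \<Sum>d\<in>UNIV. ginv g x $ c $ d * (\<Sum>e\<in>UNIV. \<Sum>k\<in>UNIV. g x $ d $ k * (?DR [c, b, e, a, k] x * V x $ e + riem g x b e a k * ?nV [c, e] x)))
       - (\<Sum>c\<in>UNIV. \<Sum>d\<in>UNIV. ginv g x $ c $ d * (\<Sum>e\<in>UNIV. riem g x d a b e * ?N1 [c, e] x))"
    by (simp only: covD_riem_flat[OF x V] right_diff_distrib mult_minus_right sum_subtractf sum_negf)
  also have "(\<Sum>c\<in>UNIV. \<Sum>d\<in>UNIV. ginv g x $ c $ d * (\<Sum>e\<in>UNIV. \<Sum>k\<in>UNIV. g x $ d $ k * (?DR [c, b, e, a, k] x * V x $ e + riem g x b e a k * ?nV [c, e] x)))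
     = (\<Sum>c\<in>UNIV. \<Sum>e\<in>UNIV. ?DR [c, b, e, a, c] x * V x $ e + riem g x b e a c * ?nV [c, e] x)"
    by (simp only: ginv_g_contract[OF x])
  also have "\<dots> = (\<Sum>e\<in>UNIV. V x $ e * (\<Sum>c\<in>UNIV. ?DR [c, b, e, a, c] x)) + (\<Sum>c\<in>UNIV. \<Sum>e\<in>UNIV. riem g x b e a c * ?nV [c, e] x)"
    by (simp only: sum.distrib sum_distrib_left, subst sum.swap) (simp add: mult_ac)
  also have "(\<Sum>e\<in>UNIV. V x $ e * (\<Sum>c\<in>UNIV. ?DR [c, b, e, a, c] x))
      = (\<Sum>e\<in>UNIV. V x $ e * (covD g [False, False] ric_tensor [e, b, a] x - covD g [False, False] ric_tensor [b, e, a] x))"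
    by (simp only: bianchi2_contracted[OF x])
  finally show ?thesis using trace_riem_covD_flat[OF x V, of a b] by simp
qed

lemma trace_covD3_flat_expanded:
  assumes x: "x \<in> U" and V: "\<And>i. smooth (\<lambda>y. V y $ i)"
  shows "(\<Sum>c\<in>UNIV. \<Sum>d\<in>UNIV. ginv g x $ c $ d *
      covD g [False, False, False] (covD g [False, False] (covD g [False] (flat V))) [c, d, p, q] x)
    = - covD g [False] (flat (boxV g V)) [p, q] x
      + (\<Sum>c\<in>UNIV. \<Sum>d\<in>UNIV. ginv g x $ c $ d * ric g p d x * covD g [False] (flat V) [c, q] x)
      + 2 * riem_action (covD g [False] (flat V)) x p q
      - (\<Sum>c\<in>UNIV. V x $ c * covD g [False, False] ric_tensor [c, p, q] x)
      + (\<Sum>d\<in>UNIV. covD g [False, False] ric_tensor [q, p, d] x * V x $ d)"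
proof -
  let ?DRic = "covD g [False, False] ric_tensor"
  have "(\<Sum>e\<in>UNIV. V x $ e * (?DRic [e, q, p] x - ?DRic [q, e, p] x))
     = (\<Sum>e\<in>UNIV. V x $ e * ?DRic [e, p, q] x - ?DRic [q, p, e] x * V x $ e)"
    using covD_ric_sym[OF x] by (intro sum.cong refl) (simp add: algebra_simps)
  then have "(\<Sum>e\<in>UNIV. V x $ e * (?DRic [e, q, p] x - ?DRic [q, e, p] x))
     = (\<Sum>c\<in>UNIV. V x $ c * ?DRic [c, p, q] x) - (\<Sum>d\<in>UNIV. ?DRic [q, p, d] x * V x $ d)"
    by (simp add: sum_subtractf)
  then show ?thesis
    unfolding trace_covD3_flat[OF x V] sum_sum_distrib4 ginv_riem_trace_contract[OF x]
      riem_action_alt1[OF x] riem_action_alt2[OF x] trace_covD_riem_flat[OF x V]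
    by simp
qed

lemma boxT_lie_g_identity:
  assumes x: "x \<in> U" and V: "\<And>i. smooth (\<lambda>y. V y $ i)"
  shows "boxT g (lie2 V (gt g)) a b x - 2 * riemT g (lie2 V (gt g)) a b x - lie2 (boxV g V) (gt g) a b x
    = 2 * lie2 V (ric g) a b x - lie2 (ricV g V) (gt g) a b x - 2 * symT (ricT g (lie2 V (gt g))) a b x"
proof -
  let ?N1 = "covD g [False] (flat V)"
  let ?Q = "\<lambda>a b. \<Sum>c\<in>UNIV. \<Sum>d\<in>UNIV. ginv g x $ c $ d *
      covD g [False, False, False] (covD g [False, False] ?N1) [c, d, a, b] x"
  have boxV: "\<And>i. smooth (\<lambda>y. boxV g V y $ i)" and ricV: "\<And>i. smooth (\<lambda>y. ricV g V y $ i)"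
    using V by simp_all
  have box: "boxT g (lie2 V (gt g)) a b x = - (?Q a b + ?Q b a)"
    unfolding boxT_lie2_g[OF x V] by (simp add: distrib_left sum.distrib)
  have riem: "riemT g (lie2 V (gt g)) a b x = - (riem_action ?N1 x a b + riem_action ?N1 x b a)"
    unfolding riemT_def lie2_g_eq_flat[OF x V] by (rule riem_action_symmetrised[OF x])
  have ric: "(\<Sum>c\<in>UNIV. V x $ c * covD g [False, False] ric_tensor [c, b, a] x)
      = (\<Sum>c\<in>UNIV. V x $ c * covD g [False, False] ric_tensor [c, a, b] x)"
    using covD_ric_sym[OF x] by simp
  show ?thesis
    unfolding box riem symT_def lie2_g_eq_flat[OF x boxV] lie2_ric[OF x V] lie2_g_eq_flat[OF x ricV]
      covD_flat_ricV[OF x V] ricT_lie2_g[OF x V] trace_covD3_flat_expanded[OF x V] ric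
    by (simp add: algebra_simps)
qed

end

theorem lemmaA1:
  fixes U :: "(real^'n::finite) set"
    and g :: "real^'n \<Rightarrow> real^'n^'n"
    and V :: "real^'n \<Rightarrow> real^'n"
  assumes "open U"
    and "\<forall>i j. smooth_on U (\<lambda>x. g x $ i $ j)"
    and "\<forall>x\<in>U. \<forall>i j. g x $ i $ j = g x $ j $ i"
    and "\<forall>x\<in>U. invertible (g x)"
    and "\<forall>i. smooth_on U (\<lambda>x. V x $ i)"
  shows "(\<forall>x\<in>U. boxV g V x
            + raise g (divT g (\<lambda>a b y. lie2 V (gt g) a b y - divV g V y * g y $ a $ b)) x
          = ricV g V x) \<and>
         (\<forall>x\<in>U. \<forall>a b.
            boxT g (lie2 V (gt g)) a b x - 2 * riemT g (lie2 V (gt g)) a b x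
              - lie2 (boxV g V) (gt g) a b x
          = 2 * lie2 V (ric g) a b x - lie2 (ricV g V) (gt g) a b x
              - 2 * symT (ricT g (lie2 V (gt g))) a b x)"
proof -
  interpret metric_chart U g
    by unfold_locales (use assms(1-4) in auto)
  have V: "\<And>i. smooth (\<lambda>x. V x $ i)" using assms(5) by blast
  show ?thesis using boxV_div_deformation[OF _ V] boxT_lie_g_identity[OF _ V] by blast
qed

end
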